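(* Let $X_1,X_2,\dots,X_n$ be a martingale with values in $\mathbb R^d$ and let $\mu_i$ be the marginal distribution of $X_i$. Then there exists a martingale $\tilde X_1,\dots,\tilde X_n$ with the Markov property such that the marginal distribution of $\tilde X_i$ is $\mu_i$ for all $i=1,\dots,n$. *)

theory Defs
  imports "HOL-Probability.Probability"
begin

definition nat_filtr :: "'w measure \<Rightarrow> (nat \<Rightarrow> 'w \<Rightarrow> 'a::topological_space) \<Rightarrow> nat \<Rightarrow> 'w measure" where
  "nat_filtr M X i = sigma (space M) (\<Union>j\<in>{1..i}. {X j -` A \<inter> space M | A. A \<in> sets borel})"

definition martingale :: "'w measure \<Rightarrow> (nat \<Rightarrow> 'w \<Rightarrow> 'a::euclidean_space) \<Rightarrow> nat \<Rightarrow> bool" where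
  "martingale M X n \<longleftrightarrow>
     (\<forall>i\<in>{1..n}. integrable M (X i)) \<and>
     (\<forall>i. 1 \<le> i \<and> i < n \<longrightarrow>
        (\<forall>b\<in>Basis. AE \<omega> in M.
           real_cond_exp M (nat_filtr M X i) (\<lambda>\<omega>. X (Suc i) \<omega> \<bullet> b) \<omega> = X i \<omega> \<bullet> b))"

definition markov :: "'w measure \<Rightarrow> (nat \<Rightarrow> 'w \<Rightarrow> 'a::topological_space) \<Rightarrow> nat \<Rightarrow> bool" where
  "markov M X n \<longleftrightarrow>
     (\<forall>i. 1 \<le> i \<and> i < n \<longrightarrow>
        (\<forall>B\<in>sets borel. AE \<omega> in M.
           real_cond_exp M (nat_filtr M X i) (indicator (X (Suc i) -` B \<inter> space M)) \<omega> =
           real_cond_exp M (vimage_algebra (space M) (X i) borel) (indicator (X (Suc i) -` B \<inter> space M)) \<omega>))"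

end

theory Submission
  imports Defs
begin

text \<open>The Markov martingale is the Markov chain on the path space whose initial law is that of
  X 1 and whose transition from time i to i + 1 is a regular conditional distribution K i of
  X (i + 1) given X i. Such kernels exist because a Euclidean space embeds Borel-isomorphically
  into [0, 1], where a conditional distribution function is assembled from Radon-Nikodym
  derivatives at the rationals and turned into a kernel by the quantile transform. Finally the
  tower property gives E[X (i + 1) | X i] = X i, so K i x has mean x for almost every x in the
  law of X i, which is exactly the martingale property of the chain.\<close>

section \<open>A Borel embedding of Euclidean space into the unit interval\<close>

lemma floor_double_minus_double_floor:
  fixes y :: real
  shows "of_int \<lfloor>2*y\<rfloor> - 2 * of_int \<lfloor>y\<rfloor> \<in> {0::real, 1}"
proof -
  have "2 * \<lfloor>y\<rfloor> \<le> \<lfloor>2*y\<rfloor>" by (simp add: le_floor_iff)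
  moreover have "2*y < of_int (2 * \<lfloor>y\<rfloor> + 2)"
    using real_of_int_floor_add_one_gt[of y] by linarith
  then have "\<lfloor>2*y\<rfloor> < 2 * \<lfloor>y\<rfloor> + 2" by (simp add: floor_less_iff)
  ultimately have "\<lfloor>2*y\<rfloor> - 2 * \<lfloor>y\<rfloor> \<in> {0, 1}" by auto
  then show ?thesis by (auto simp flip: of_int_mult of_int_diff)
qed

definition bin_digit :: "nat \<Rightarrow> real \<Rightarrow> real" where
  "bin_digit k s = of_int \<lfloor>2^(Suc k) * s\<rfloor> - 2 * of_int \<lfloor>2^k * s\<rfloor>"

lemma bin_digit_01: "bin_digit k s \<in> {0, 1}"
  unfolding bin_digit_def using floor_double_minus_double_floor[of "2^k * s"] by (simp add: mult.assoc)

lemma sum_bin_digit: "(\<Sum>k<m. bin_digit k s / 2^(Suc k)) = of_int \<lfloor>2^m * s\<rfloor> / 2^m - of_int \<lfloor>s\<rfloor>"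
proof (induction m)
  case (Suc m)
  have "bin_digit m s / 2^(Suc m) = of_int \<lfloor>2^(Suc m) * s\<rfloor> / 2^(Suc m) - of_int \<lfloor>2^m * s\<rfloor> / 2^m"
    unfolding bin_digit_def by (simp add: diff_divide_distrib)
  then show ?case using Suc by simp
qed simp

lemma bin_digit_sums:
  assumes "0 \<le> s" "s < 1"
  shows "(\<lambda>k. bin_digit k s / 2^(Suc k)) sums s"
proof -
  have "(\<lambda>m. of_int \<lfloor>2^m * s\<rfloor> / 2^m) \<longlonglongrightarrow> s"
  proof (rule LIMSEQ_I)
    fix r :: real assume "0 < r"
    then obtain N where N: "(1/2::real)^N < r" using real_arch_pow_inv[of r "1/2"] by auto
    have "norm (of_int \<lfloor>2^m * s\<rfloor> / 2^m - s) < r" if "N \<le> m" for m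
    proof -
      have "norm (of_int \<lfloor>2^m * s\<rfloor> / 2^m - s) = (2^m * s - of_int \<lfloor>2^m * s\<rfloor>) / 2^m"
        by (simp add: field_simps)
      also have "\<dots> < 1 / 2^m"
        by (intro divide_strict_right_mono) (linarith, simp)
      also have "\<dots> = (1/2)^m" by (simp add: power_divide)
      also have "\<dots> \<le> (1/2)^N" using that by (intro power_decreasing) auto
      finally show ?thesis using N by simp
    qed
    then show "\<exists>no. \<forall>m\<ge>no. norm (of_int \<lfloor>2^m * s\<rfloor> / 2^m - s) < r" by blast
  qed
  moreover have "\<lfloor>s\<rfloor> = 0" using assms by (simp add: floor_eq_iff)
  ultimately show ?thesis unfolding sums_def sum_bin_digit by simp
qed

definition quat_digit :: "nat \<Rightarrow> real \<Rightarrow> real" where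
  "quat_digit k t = of_int \<lfloor>4^(Suc k) * t\<rfloor> - 4 * of_int \<lfloor>4^k * t\<rfloor>"

lemma quarter_powers_sums: "(\<lambda>j. (1/4::real)^(Suc j)) sums (1/3)"
  using sums_mult[OF geometric_sums[of "1/4::real"], of "1/4"] by simp

lemma
  assumes "\<And>k. e k \<in> {0::real, 1}"
  shows summable_01_quat: "summable (\<lambda>j. e j / 4^(Suc j))"
    and suminf_01_quat_bounds: "0 \<le> (\<Sum>j. e j / 4^(Suc j))" "(\<Sum>j. e j / 4^(Suc j)) \<le> 1/3"
proof -
  have le: "e j / 4^(Suc j) \<le> (1/4)^(Suc j)" and nonneg: "0 \<le> e j / 4^(Suc j)" for j
    using assms[of j] by (auto simp: power_divide)
  show summ: "summable (\<lambda>j. e j / 4^(Suc j))"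
    by (rule summable_comparison_test[OF _ sums_summable[OF quarter_powers_sums]])
      (metis abs_of_nonneg le nonneg real_norm_def)
  show "0 \<le> (\<Sum>j. e j / 4^(Suc j))" by (intro suminf_nonneg summ nonneg)
  show "(\<Sum>j. e j / 4^(Suc j)) \<le> 1/3"
    using suminf_le[OF le summ] quarter_powers_sums by (simp add: sums_iff)
qed

lemma quat_digit_suminf_01:
  assumes e: "\<And>k. e k \<in> {0::real, 1}"
  shows "quat_digit k (\<Sum>j. e j / 4^(Suc j)) = e k"
proof -
  define T where "T k = (\<Sum>j. e (j+k) / 4^(Suc j))" for k
  define t where "t = (\<Sum>j. e j / 4^(Suc j))"
  have e': "e (j+k) \<in> {0, 1}" for j k using e by simp
  \<comment> \<open>T k is the tail of the expansion; with digits 0 and 1 it stays in [0, 1/3], so it is the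
    fractional part of 4^k t.\<close>
  have T_bounds: "0 \<le> T k \<and> T k \<le> 1/3" for k
    unfolding T_def using suminf_01_quat_bounds[OF e'] by simp
  have T_Suc: "T k = e k / 4 + T (Suc k) / 4" for k
  proof -
    have summ: "summable (\<lambda>j. e (j+k) / 4^(Suc j))" for k by (rule summable_01_quat[OF e'])
    have "T k = e k / 4 + (\<Sum>j. e (Suc j + k) / 4^(Suc (Suc j)))"
      unfolding T_def using suminf_split_head[OF summ[of k]] by simp
    also have "(\<Sum>j. e (Suc j + k) / 4^(Suc (Suc j))) = (\<Sum>j. e (j + Suc k) / 4^(Suc j)) / 4"
      by (subst suminf_divide[OF summ, symmetric]) (simp add: field_simps)
    finally show ?thesis unfolding T_def .
  qed
  have integral: "4^k * t - T k \<in> \<int>" for k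
  proof (induction k)
    case 0 then show ?case by (simp add: T_def t_def)
  next
    case (Suc k)
    have "4^(Suc k) * t - T (Suc k) = 4 * (4^k * t - T k) + e k"
      using T_Suc[of k] by (simp add: field_simps)
    moreover have "e k \<in> \<int>" using e[of k] by auto
    ultimately show ?case using Suc.IH by (metis Ints_add Ints_mult Ints_numeral)
  qed
  have floor_eq: "of_int \<lfloor>4^k * t\<rfloor> = 4^k * t - T k" for k
  proof -
    obtain z where z: "4^k * t - T k = of_int z" using integral[of k] by (auto elim: Ints_cases)
    then have "\<lfloor>4^k * t\<rfloor> = z" using T_bounds[of k] by (intro floor_unique) auto
    then show ?thesis using z by simp
  qed
  have "quat_digit k t = 4 * T k - T (Suc k)" unfolding quat_digit_def floor_eq by (simp add: field_simps)
  also have "\<dots> = e k" using T_Suc[of k] by simp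
  finally show ?thesis unfolding t_def .
qed

definition squash :: "real \<Rightarrow> real" where "squash c = (1 + c / (1 + \<bar>c\<bar>)) / 2"
definition unsquash :: "real \<Rightarrow> real" where "unsquash x = (2 * x - 1) / (1 - \<bar>2 * x - 1\<bar>)"

lemma squash_bounds: "0 < squash c" "squash c < 1"
proof -
  have "\<bar>c / (1 + \<bar>c\<bar>)\<bar> < 1" by (simp add: abs_divide)
  then have "-1 < c / (1 + \<bar>c\<bar>)" "c / (1 + \<bar>c\<bar>) < 1" by linarith+
  then show "0 < squash c" "squash c < 1" unfolding squash_def by auto
qed

lemma unsquash_squash: "unsquash (squash c) = c"
proof -
  have "2 * squash c - 1 = c / (1 + \<bar>c\<bar>)" unfolding squash_def by (simp add: field_simps)
  moreover have "1 - \<bar>c / (1 + \<bar>c\<bar>)\<bar> = 1 / (1 + \<bar>c\<bar>)" by (simp add: abs_divide field_simps)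
  ultimately show ?thesis unfolding unsquash_def by simp
qed

text \<open>A point is encoded by interleaving the binary digits of its squashed coordinates (with
  respect to a list enumerating the basis) and reading the resulting 0/1 sequence in base 4:
  as the digits 2 and 3 never occur, the digits are recovered exactly, with none of the
  ambiguity of dyadic expansions.\<close>

definition unit_embed_digit :: "'a::euclidean_space list \<Rightarrow> 'a \<Rightarrow> nat \<Rightarrow> real" where
  "unit_embed_digit bs a k = bin_digit (k div length bs) (squash (a \<bullet> bs ! (k mod length bs)))"

definition unit_embed :: "'a::euclidean_space list \<Rightarrow> 'a \<Rightarrow> real" where
  "unit_embed bs a = (\<Sum>k. unit_embed_digit bs a k / 4^(Suc k))"

definition unit_decode :: "'a::euclidean_space list \<Rightarrow> real \<Rightarrow> 'a" where
  "unit_decode bs t =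
     (\<Sum>j<length bs. unsquash (\<Sum>m. quat_digit (m * length bs + j) t / 2^(Suc m)) *\<^sub>R bs ! j)"

lemma unit_embed_digit_01: "unit_embed_digit bs a k \<in> {0, 1}"
  unfolding unit_embed_digit_def by (rule bin_digit_01)

lemma unit_embed_bounds: "0 \<le> unit_embed bs a" "unit_embed bs a \<le> 1"
  using suminf_01_quat_bounds[of "unit_embed_digit bs a", OF unit_embed_digit_01]
  unfolding unit_embed_def by auto

lemma unit_decode_unit_embed:
  assumes bs: "distinct bs" "set bs = (Basis :: 'a::euclidean_space set)"
  shows "unit_decode bs (unit_embed bs a) = a"
proof -
  define d where "d = length bs"
  have digit: "quat_digit k (unit_embed bs a) = unit_embed_digit bs a k" for k
    unfolding unit_embed_def by (rule quat_digit_suminf_01[OF unit_embed_digit_01])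
  have coord: "(\<Sum>m. quat_digit (m * d + j) (unit_embed bs a) / 2^(Suc m)) = squash (a \<bullet> bs!j)"
    if "j < d" for j
  proof -
    have "quat_digit (m * d + j) (unit_embed bs a) = bin_digit m (squash (a \<bullet> bs!j))" for m
      using that unfolding digit unit_embed_digit_def d_def[symmetric] by simp
    then show ?thesis
      using bin_digit_sums[of "squash (a \<bullet> bs!j)"] squash_bounds[of "a \<bullet> bs!j"] by (simp add: sums_iff)
  qed
  have "unit_decode bs (unit_embed bs a) = (\<Sum>j<d. (a \<bullet> bs!j) *\<^sub>R bs!j)"
    unfolding unit_decode_def d_def[symmetric] using coord unsquash_squash by (intro sum.cong) auto
  also have "\<dots> = (\<Sum>b\<in>Basis. (a \<bullet> b) *\<^sub>R b)"
    using sum.reindex_bij_betw[OF bij_betw_nth[OF bs(1) refl bs(2)[symmetric]], of "\<lambda>b. (a \<bullet> b) *\<^sub>R b"]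
    unfolding d_def by simp
  also have "\<dots> = a" by (rule euclidean_representation)
  finally show ?thesis .
qed

lemma borel_measurable_floor_comp[measurable (raw)]:
  "f \<in> borel_measurable M \<Longrightarrow> (\<lambda>x. real_of_int \<lfloor>f x :: real\<rfloor>) \<in> borel_measurable M"
  using measurable_compose[OF _ borel_measurable_real_floor] by (simp add: comp_def)

lemma borel_measurable_unit_embed: "unit_embed bs \<in> borel_measurable borel"
  unfolding unit_embed_def[abs_def] unit_embed_digit_def bin_digit_def squash_def by measurable

lemma borel_measurable_unit_decode: "unit_decode bs \<in> borel_measurable borel"
  unfolding unit_decode_def[abs_def] quat_digit_def unsquash_def by measurable

lemma borel_embedding_into_unit_interval:
  obtains \<phi> :: "'a::euclidean_space \<Rightarrow> real" and \<psi>
  where "\<phi> \<in> borel_measurable borel" "\<psi> \<in> borel_measurable borel"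
    "\<And>a. 0 \<le> \<phi> a \<and> \<phi> a \<le> 1" "\<And>a. \<psi> (\<phi> a) = a"
proof -
  obtain bs where "distinct bs" "set bs = (Basis :: 'a set)"
    using finite_distinct_list[OF finite_Basis] by metis
  then show ?thesis
    using that borel_measurable_unit_embed borel_measurable_unit_decode unit_embed_bounds
      unit_decode_unit_embed by blast
qed

section \<open>Regular conditional distributions\<close>

lemma all_le_add_inverse_Suc_iff: "(\<forall>m. x \<le> t + 1 / real (Suc m)) \<longleftrightarrow> x \<le> (t::real)"
proof
  assume le: "\<forall>m. x \<le> t + 1 / real (Suc m)"
  show "x \<le> t"
  proof (rule ccontr)
    assume "\<not> x \<le> t"
    then obtain m where "inverse (real (Suc m)) < x - t" using reals_Archimedean[of "x - t"] by auto
    moreover have "x \<le> t + 1 / real (Suc m)" using le by blast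
    ultimately show False by (simp add: inverse_eq_divide)
  qed
qed (auto intro: add_increasing2)

lemma sets_borel_eq_sigma_rat_atMost:
  "sets (borel :: real measure) = sigma_sets UNIV (range (\<lambda>q::rat. {..real_of_rat q}))"
proof
  show "sigma_sets UNIV (range (\<lambda>q::rat. {..real_of_rat q})) \<subseteq> sets borel"
    using sets.sigma_sets_subset[of "range (\<lambda>q::rat. {..real_of_rat q})" borel]
    by (auto intro: borel_closed)
next
  have "{..t} \<in> sigma_sets UNIV (range (\<lambda>q::rat. {..real_of_rat q}))" for t :: real
  proof -
    obtain r :: "nat \<Rightarrow> rat" where r: "\<And>m. t < of_rat (r m) \<and> of_rat (r m) < t + 1 / real (Suc m)"
      using of_rat_dense[of t "t + 1 / real (Suc _)"] by (metis less_add_same_cancel1 of_nat_0_less_iff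
          zero_less_Suc zero_less_divide_1_iff)
    have "{..t} = (\<Inter>m. {..real_of_rat (r m)})"
    proof (intro set_eqI iffI)
      fix x assume x: "x \<in> (\<Inter>m. {..real_of_rat (r m)})"
      have "x \<le> t + 1 / real (Suc m)" for m
      proof -
        have "x \<le> real_of_rat (r m)" using x by blast
        then show ?thesis using r[of m] by linarith
      qed
      then have "\<forall>m. x \<le> t + 1 / real (Suc m)" by blast
      then have "x \<le> t" by (rule all_le_add_inverse_Suc_iff[THEN iffD1])
      then show "x \<in> {..t}" by simp
    qed (use r in \<open>auto intro: order_trans less_imp_le\<close>)
    then show ?thesis by (auto intro: sigma_sets_Inter)
  qed
  then have "sigma_sets UNIV (range atMost) \<subseteq> sigma_sets UNIV (range (\<lambda>q::rat. {..real_of_rat q}))"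
    by (intro sigma_sets_mono) auto
  then show "sets (borel :: real measure) \<subseteq> sigma_sets UNIV (range (\<lambda>q::rat. {..real_of_rat q}))"
    by (simp add: borel_eq_atMost)
qed

lemma Int_stable_rat_atMost: "Int_stable (range (\<lambda>q::rat. {..real_of_rat q}))"
proof (rule Int_stableI, safe)
  fix q r :: rat
  have "{..real_of_rat q} \<inter> {..real_of_rat r} = {..real_of_rat (min q r)}"
    by (auto simp: of_rat_less_eq min_def)
  then show "{..real_of_rat q} \<inter> {..real_of_rat r} \<in> range (\<lambda>q::rat. {..real_of_rat q})" by blast
qed

lemma measure_eqI_rat_atMost:
  fixes M N :: "real measure"
  assumes "sets M = sets borel" "sets N = sets borel"
    and eq: "\<And>q. emeasure M {..real_of_rat q} = emeasure N {..real_of_rat q}"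
    and fin: "\<And>q. emeasure M {..real_of_rat q} \<noteq> \<infinity>"
  shows "M = N"
proof (rule measure_eqI_generator_eq[OF Int_stable_rat_atMost, where \<Omega>=UNIV and A="\<lambda>i. {..real i}"])
  show "(\<Union>i. {..real i}) = UNIV"
    using real_arch_simple by auto
  show "range (\<lambda>i. {..real i}) \<subseteq> range (\<lambda>q::rat. {..real_of_rat q})"
  proof (intro image_subsetI)
    show "{..real i} \<in> range (\<lambda>q::rat. {..real_of_rat q})" for i
      by (rule range_eqI[of _ _ "of_nat i"]) (simp add: of_rat_of_nat_eq)
  qed
  show "emeasure M {..real i} \<noteq> \<infinity>" for i
    using fin[of "of_nat i"] by (simp add: of_rat_of_nat_eq)
qed (use assms sets_borel_eq_sigma_rat_atMost in auto)

definition unit_rat_cdf :: "(rat \<Rightarrow> ennreal) \<Rightarrow> bool" where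
  "unit_rat_cdf F \<longleftrightarrow> mono F \<and> (\<forall>q<0. F q = 0) \<and> (\<forall>q\<ge>1. F q = 1) \<and>
     (\<forall>q. F q = (INF m. F (q + 1 / of_nat (Suc m))))"

lemma unit_rat_cdfD:
  assumes "unit_rat_cdf F"
  shows "q \<le> r \<Longrightarrow> F q \<le> F r" "q < 0 \<Longrightarrow> F q = 0" "1 \<le> q \<Longrightarrow> F q = 1"
    "F q = (INF m. F (q + 1 / of_nat (Suc m)))"
  using assms unfolding unit_rat_cdf_def mono_def by blast+

text \<open>The restriction to q \<ge> 0 and the extra point 1 make the set nonempty and bounded below;
  for a unit_rat_cdf and 0 < u \<le> 1 they do not change the infimum.\<close>

definition rat_quantile :: "(rat \<Rightarrow> ennreal) \<Rightarrow> real \<Rightarrow> real" where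
  "rat_quantile F u = Inf ({real_of_rat q | q. 0 \<le> q \<and> ennreal u \<le> F q} \<union> {1})"

lemma mono_rat_quantile: "mono (rat_quantile F)"
proof (rule monoI)
  fix u u' :: real assume "u \<le> u'"
  then show "rat_quantile F u \<le> rat_quantile F u'" unfolding rat_quantile_def
    by (intro cInf_superset_mono bdd_belowI[of _ 0])
      (auto simp: zero_le_of_rat_iff intro: order_trans[OF ennreal_leI])
qed

lemma borel_measurable_rat_quantile: "rat_quantile F \<in> borel_measurable borel"
  by (rule borel_measurable_mono[OF mono_rat_quantile])

lemma ennreal_le_of_rat_quantile_le:
  assumes F: "unit_rat_cdf F" and "u \<le> 1" and le: "rat_quantile F u \<le> real_of_rat t"
  shows "ennreal u \<le> F t"
proof -
  let ?S = "{real_of_rat q | q. 0 \<le> q \<and> ennreal u \<le> F q} \<union> {1}"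
  have "ennreal u \<le> F (t + 1 / of_nat (Suc m))" for m
  proof -
    have "real_of_rat t < real_of_rat (t + 1 / of_nat (Suc m))" by (simp add: of_rat_less)
    then have "Inf ?S < real_of_rat (t + 1 / of_nat (Suc m))" using le by (simp add: rat_quantile_def)
    then obtain y where y: "y \<in> ?S" "y < real_of_rat (t + 1 / of_nat (Suc m))"
      using cInf_lessD[of ?S] by blast
    show ?thesis
    proof (cases "y = 1")
      case True
      then have "1 \<le> t + 1 / of_nat (Suc m)"
        using y(2) by (metis less_imp_le of_rat_1 of_rat_less_eq)
      then show ?thesis using unit_rat_cdfD(3)[OF F] \<open>u \<le> 1\<close> by simp
    next
      case False
      then obtain q where "y = real_of_rat q" "ennreal u \<le> F q" using y(1) by blast
      moreover have "q \<le> t + 1 / of_nat (Suc m)" using y(2) calculation(1) by (simp add: of_rat_less)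
      ultimately show ?thesis using unit_rat_cdfD(1)[OF F] order_trans by blast
    qed
  qed
  then show "ennreal u \<le> F t" by (subst unit_rat_cdfD(4)[OF F]) (rule INF_greatest)
qed

lemma rat_quantile_le_of_ennreal_le:
  assumes F: "unit_rat_cdf F" and "0 < u" and uF: "ennreal u \<le> F t"
  shows "rat_quantile F u \<le> real_of_rat t"
proof (rule ccontr)
  let ?S = "{real_of_rat q | q. 0 \<le> q \<and> ennreal u \<le> F q} \<union> {1}"
  assume "\<not> rat_quantile F u \<le> real_of_rat t"
  then have "real_of_rat t < Inf ?S" by (simp add: rat_quantile_def)
  then obtain r :: rat where r: "real_of_rat t < real_of_rat r" "real_of_rat r < Inf ?S"
    using of_rat_dense by blast
  then have uFr: "ennreal u \<le> F r" using uF unit_rat_cdfD(1)[OF F, of t r] by (simp add: of_rat_less)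
  have "0 \<le> r"
  proof (rule ccontr)
    assume "\<not> 0 \<le> r"
    then show False using unit_rat_cdfD(2)[OF F, of r] uFr \<open>0 < u\<close> by simp
  qed
  then have "real_of_rat r \<in> ?S" using uFr by blast
  moreover have "bdd_below ?S" by (rule bdd_belowI[of _ 0]) (auto simp: zero_le_of_rat_iff)
  ultimately have "Inf ?S \<le> real_of_rat r" by (rule cInf_lower)
  then show False using r(2) by simp
qed

lemma rat_quantile_le_iff:
  assumes "unit_rat_cdf F" "0 < u" "u \<le> 1"
  shows "rat_quantile F u \<le> real_of_rat t \<longleftrightarrow> ennreal u \<le> F t"
  using assms ennreal_le_of_rat_quantile_le rat_quantile_le_of_ennreal_le by blast

lemma
  fixes F :: "rat \<Rightarrow> ennreal"
  defines "D \<equiv> distr (uniform_measure lborel {0<..1::real}) borel (rat_quantile F)"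
  shows prob_space_distr_rat_quantile: "prob_space D"
    and emeasure_distr_rat_quantile: "unit_rat_cdf F \<Longrightarrow> emeasure D {..real_of_rat t} = F t"
proof -
  let ?U = "uniform_measure lborel {0<..1::real}"
  have U: "prob_space ?U" by (rule prob_space_uniform_measure) auto
  have Q: "rat_quantile F \<in> ?U \<rightarrow>\<^sub>M borel"
    using borel_measurable_rat_quantile by (simp add: measurable_cong_sets[OF sets_uniform_measure refl])
  show "prob_space D" unfolding D_def by (rule prob_space.prob_space_distr[OF U Q])
  assume F: "unit_rat_cdf F"
  have "F t \<le> F (max t 1)" by (rule unit_rat_cdfD(1)[OF F]) simp
  also have "\<dots> = 1" by (rule unit_rat_cdfD(3)[OF F]) simp
  finally have "F t \<le> 1" .
  define h where "h = enn2real (F t)"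
  have h: "F t = ennreal h" "0 \<le> h" "h \<le> 1"
    using \<open>F t \<le> 1\<close> unfolding h_def by (auto simp: ennreal_enn2real_if enn2real_leI top_unique)
  have "{0<..1} \<inter> rat_quantile F -` {..real_of_rat t} = {0<..h}"
  proof (intro set_eqI iffI)
    fix u assume "u \<in> {0<..1} \<inter> rat_quantile F -` {..real_of_rat t}"
    then show "u \<in> {0<..h}" using rat_quantile_le_iff[OF F, of u t] h by (simp add: ennreal_le_iff)
  next
    fix u assume "u \<in> {0<..h}"
    then show "u \<in> {0<..1} \<inter> rat_quantile F -` {..real_of_rat t}"
      using rat_quantile_le_iff[OF F, of u t] h by simp
  qed
  moreover have "rat_quantile F -` {..real_of_rat t} \<in> sets borel"
    using measurable_sets[OF borel_measurable_rat_quantile] by simp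
  ultimately have "emeasure ?U (rat_quantile F -` {..real_of_rat t} \<inter> space ?U) = ennreal h"
    using h(2) by (simp add: emeasure_uniform_measure Int_commute divide_ennreal_def)
  then show "emeasure D {..real_of_rat t} = F t"
    unfolding D_def h(1) by (subst emeasure_distr[OF Q]) simp_all
qed

definition cond_distr_kernel ::
    "'w measure \<Rightarrow> 's measure \<Rightarrow> 't measure \<Rightarrow> ('w \<Rightarrow> 's) \<Rightarrow> ('w \<Rightarrow> 't) \<Rightarrow> ('s \<Rightarrow> 't measure) \<Rightarrow> bool"
  where
  "cond_distr_kernel M S T W V K \<longleftrightarrow> K \<in> S \<rightarrow>\<^sub>M prob_algebra T \<and>
     (\<forall>g \<in> borel_measurable (S \<Otimes>\<^sub>M T).
        (\<integral>\<^sup>+\<omega>. g (W \<omega>, V \<omega>) \<partial>M) = (\<integral>\<^sup>+x. \<integral>\<^sup>+y. g (x, y) \<partial>K x \<partial>distr M S W))"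

lemma cond_distr_kernelD:
  assumes "cond_distr_kernel M S T W V K"
  shows "K \<in> S \<rightarrow>\<^sub>M prob_algebra T"
    and "g \<in> borel_measurable (S \<Otimes>\<^sub>M T) \<Longrightarrow>
      (\<integral>\<^sup>+\<omega>. g (W \<omega>, V \<omega>) \<partial>M) = (\<integral>\<^sup>+x. \<integral>\<^sup>+y. g (x, y) \<partial>K x \<partial>distr M S W)"
  using assms unfolding cond_distr_kernel_def by blast+

lemma distr_pair_eq_bind_of_rectangles:
  assumes "prob_space M" and W[measurable]: "W \<in> M \<rightarrow>\<^sub>M S" and V[measurable]: "V \<in> M \<rightarrow>\<^sub>M T"
    and K: "K \<in> S \<rightarrow>\<^sub>M prob_algebra T"
    and rect: "\<And>A B. A \<in> sets S \<Longrightarrow> B \<in> sets T \<Longrightarrow>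
       emeasure M {\<omega>\<in>space M. W \<omega> \<in> A \<and> V \<omega> \<in> B} = (\<integral>\<^sup>+x. indicator A x * emeasure (K x) B \<partial>distr M S W)"
  shows "distr M (S \<Otimes>\<^sub>M T) (\<lambda>\<omega>. (W \<omega>, V \<omega>)) = distr M S W \<bind> (\<lambda>x. distr (K x) (S \<Otimes>\<^sub>M T) (Pair x))"
    (is "?L = _")
proof -
  let ?\<mu> = "distr M S W" and ?K = "\<lambda>x. distr (K x) (S \<Otimes>\<^sub>M T) (Pair x)"
  interpret prob_space M by fact
  have space_S: "space S \<noteq> {}" using not_empty measurable_space[OF W] by auto
  have K_space: "prob_space (K x)" "sets (K x) = sets T" if "x \<in> space S" for x
    using measurable_space[OF K that] by (auto simp: space_prob_algebra)
  have Pair_K: "Pair x \<in> K x \<rightarrow>\<^sub>M S \<Otimes>\<^sub>M T" if "x \<in> space S" for x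
    using measurable_Pair1'[OF that] by (simp add: measurable_cong_sets[OF K_space(2)[OF that] refl])
  have K': "?K \<in> ?\<mu> \<rightarrow>\<^sub>M subprob_algebra (S \<Otimes>\<^sub>M T)"
  proof -
    have "?K \<in> S \<rightarrow>\<^sub>M prob_algebra (S \<Otimes>\<^sub>M T)" by (rule measurable_distr_prob_space2[OF K]) simp
    then show ?thesis by (simp add: measurable_prob_algebraD measurable_cong_sets[OF sets_distr refl])
  qed
  show ?thesis
  proof (rule measure_eqI_generator_eq[OF Int_stable_pair_measure_generator pair_measure_closed,
        where A="\<lambda>i. space S \<times> space T"])
    fix X assume "X \<in> {a \<times> b |a b. a \<in> sets S \<and> b \<in> sets T}"
    then obtain a b where X: "X = a \<times> b" "a \<in> sets S" "b \<in> sets T" by blast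
    then have X_sets: "X \<in> sets (S \<Otimes>\<^sub>M T)" by simp
    have "emeasure ?L X = emeasure M {\<omega>\<in>space M. W \<omega> \<in> a \<and> V \<omega> \<in> b}"
      using X X_sets by (subst emeasure_distr) (auto intro!: arg_cong2[where f=emeasure])
    also have "\<dots> = (\<integral>\<^sup>+x. indicator a x * emeasure (K x) b \<partial>?\<mu>)" by (rule rect[OF X(2,3)])
    also have "\<dots> = (\<integral>\<^sup>+x. emeasure (?K x) X \<partial>?\<mu>)"
    proof (rule nn_integral_cong)
      fix x assume "x \<in> space ?\<mu>"
      then have x: "x \<in> space S" by simp
      have "Pair x -` X \<inter> space (K x) = (if x \<in> a then b else {})"
        using X sets.sets_into_space[OF X(3)] sets_eq_imp_space_eq[OF K_space(2)[OF x]] by auto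
      then show "indicator a x * emeasure (K x) b = emeasure (?K x) X"
        by (simp add: emeasure_distr[OF Pair_K[OF x] X_sets])
    qed
    also have "\<dots> = emeasure (?\<mu> \<bind> ?K) X"
      using space_S by (subst emeasure_bind[OF _ K' X_sets]) auto
    finally show "emeasure ?L X = emeasure (?\<mu> \<bind> ?K) X" .
  next
    show "sets (?\<mu> \<bind> ?K) = sigma_sets (space S \<times> space T) {a \<times> b |a b. a \<in> sets S \<and> b \<in> sets T}"
      using space_S by (subst sets_bind[where N="S \<Otimes>\<^sub>M T"]) (auto simp: sets_pair_measure)
    show "emeasure ?L (space S \<times> space T) \<noteq> \<infinity>"
      by (subst emeasure_distr) (auto simp: emeasure_finite space_pair_measure)
  qed (auto simp: sets_pair_measure)
qed

lemma cond_distr_kernel_of_rectangles: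
  assumes "prob_space M" and W[measurable]: "W \<in> M \<rightarrow>\<^sub>M S" and V[measurable]: "V \<in> M \<rightarrow>\<^sub>M T"
    and K: "K \<in> S \<rightarrow>\<^sub>M prob_algebra T"
    and rect: "\<And>A B. A \<in> sets S \<Longrightarrow> B \<in> sets T \<Longrightarrow>
       emeasure M {\<omega>\<in>space M. W \<omega> \<in> A \<and> V \<omega> \<in> B} = (\<integral>\<^sup>+x. indicator A x * emeasure (K x) B \<partial>distr M S W)"
  shows "cond_distr_kernel M S T W V K"
  unfolding cond_distr_kernel_def
proof (intro conjI ballI K)
  fix g :: "_ \<Rightarrow> ennreal" assume g[measurable]: "g \<in> borel_measurable (S \<Otimes>\<^sub>M T)"
  let ?\<mu> = "distr M S W" and ?K = "\<lambda>x. distr (K x) (S \<Otimes>\<^sub>M T) (Pair x)"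
  have K_sets: "sets (K x) = sets T" if "x \<in> space S" for x
    using measurable_space[OF K that] by (auto simp: space_prob_algebra)
  have K': "?K \<in> ?\<mu> \<rightarrow>\<^sub>M subprob_algebra (S \<Otimes>\<^sub>M T)"
  proof -
    have "?K \<in> S \<rightarrow>\<^sub>M prob_algebra (S \<Otimes>\<^sub>M T)" by (rule measurable_distr_prob_space2[OF K]) simp
    then show ?thesis by (simp add: measurable_prob_algebraD measurable_cong_sets[OF sets_distr refl])
  qed
  have joint: "distr M (S \<Otimes>\<^sub>M T) (\<lambda>\<omega>. (W \<omega>, V \<omega>)) = ?\<mu> \<bind> ?K"
    by (rule distr_pair_eq_bind_of_rectangles[OF assms(1-4)]) (rule rect)
  have "(\<integral>\<^sup>+\<omega>. g (W \<omega>, V \<omega>) \<partial>M) = (\<integral>\<^sup>+z. g z \<partial>distr M (S \<Otimes>\<^sub>M T) (\<lambda>\<omega>. (W \<omega>, V \<omega>)))"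
    by (subst nn_integral_distr) auto
  also have "\<dots> = (\<integral>\<^sup>+x. \<integral>\<^sup>+z. g z \<partial>?K x \<partial>?\<mu>)"
    unfolding joint by (rule nn_integral_bind[OF g K'])
  also have "\<dots> = (\<integral>\<^sup>+x. \<integral>\<^sup>+y. g (x, y) \<partial>K x \<partial>?\<mu>)"
  proof (rule nn_integral_cong)
    fix x assume "x \<in> space ?\<mu>"
    then have x: "x \<in> space S" by simp
    have "Pair x \<in> K x \<rightarrow>\<^sub>M S \<Otimes>\<^sub>M T"
      using measurable_Pair1'[OF x] by (simp add: measurable_cong_sets[OF K_sets[OF x] refl])
    then show "(\<integral>\<^sup>+z. g z \<partial>?K x) = (\<integral>\<^sup>+y. g (x, y) \<partial>K x)" by (subst nn_integral_distr) auto
  qed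
  finally show "(\<integral>\<^sup>+\<omega>. g (W \<omega>, V \<omega>) \<partial>M) = (\<integral>\<^sup>+x. \<integral>\<^sup>+y. g (x, y) \<partial>K x \<partial>?\<mu>)" .
qed

locale unit_valued_disintegration = prob_space M for M :: "'w measure" +
  fixes S :: "'s measure" and W :: "'w \<Rightarrow> 's" and T :: "'w \<Rightarrow> real"
  assumes measurable_W[measurable]: "W \<in> M \<rightarrow>\<^sub>M S"
    and borel_measurable_T[measurable]: "T \<in> borel_measurable M"
    and T_bounds: "\<And>\<omega>. \<omega> \<in> space M \<Longrightarrow> 0 \<le> T \<omega> \<and> T \<omega> \<le> 1"
begin

sublocale law: prob_space "distr M S W"
  by (rule prob_space_distr) simp

definition joint :: "'s set \<Rightarrow> real set \<Rightarrow> ennreal" where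
  "joint A B = emeasure M {\<omega>\<in>space M. W \<omega> \<in> A \<and> T \<omega> \<in> B}"

lemma joint_UNIV: "A \<in> sets S \<Longrightarrow> joint A UNIV = emeasure (distr M S W) A"
  unfolding joint_def by (subst emeasure_distr) (auto intro!: arg_cong2[where f=emeasure])

lemma joint_finite: "joint A B \<noteq> \<infinity>"
  unfolding joint_def by (simp add: emeasure_finite)

definition cond_prob :: "real set \<Rightarrow> 's \<Rightarrow> ennreal" where
  "cond_prob B = RN_deriv (distr M S W) (distr (density M (\<lambda>\<omega>. indicator B (T \<omega>))) S W)"

lemma borel_measurable_cond_prob[measurable]: "cond_prob B \<in> borel_measurable S"
  unfolding cond_prob_def using borel_measurable_RN_deriv by (simp cong: measurable_cong_sets)

lemma nn_integral_cond_prob: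
  assumes A: "A \<in> sets S" and B: "B \<in> sets borel"
  shows "(\<integral>\<^sup>+x. cond_prob B x * indicator A x \<partial>distr M S W) = joint A B"
proof -
  define \<nu> where "\<nu> = distr (density M (\<lambda>\<omega>. indicator B (T \<omega>))) S W"
  have \<nu>: "emeasure \<nu> A' = joint A' B" if "A' \<in> sets S" for A'
  proof -
    have "emeasure \<nu> A' = (\<integral>\<^sup>+\<omega>. indicator B (T \<omega>) * indicator (W -` A' \<inter> space M) \<omega> \<partial>M)"
      unfolding \<nu>_def using that B by (simp add: emeasure_distr emeasure_density)
    also have "\<dots> = (\<integral>\<^sup>+\<omega>. indicator {\<omega>\<in>space M. W \<omega> \<in> A' \<and> T \<omega> \<in> B} \<omega> \<partial>M)"
      by (intro nn_integral_cong) (auto split: split_indicator)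
    finally show ?thesis unfolding joint_def using that B by simp
  qed
  have "absolutely_continuous (distr M S W) \<nu>"
  proof (unfold absolutely_continuous_def, safe)
    fix A' assume A': "A' \<in> null_sets (distr M S W)"
    then have "A' \<in> sets S" by (simp add: null_sets_def)
    moreover have "joint A' B \<le> joint A' UNIV"
      unfolding joint_def using \<open>A' \<in> sets S\<close> B by (intro emeasure_mono) auto
    ultimately show "A' \<in> null_sets \<nu>"
      using A' \<nu> by (auto simp: null_sets_def joint_UNIV \<nu>_def)
  qed
  moreover have "sets \<nu> = sets (distr M S W)" unfolding \<nu>_def by simp
  ultimately have "density (distr M S W) (cond_prob B) = \<nu>"
    unfolding cond_prob_def \<nu>_def[symmetric] by (intro law.density_RN_deriv)
  then have "emeasure (density (distr M S W) (cond_prob B)) A = joint A B" using \<nu>[OF A] by simp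
  then show ?thesis using A by (simp add: emeasure_density)
qed

lemma AE_cond_prob_eqI:
  assumes B: "B \<in> sets borel" and g[measurable]: "g \<in> borel_measurable S"
    and eq: "\<And>A. A \<in> sets S \<Longrightarrow> joint A B = (\<integral>\<^sup>+x. g x * indicator A x \<partial>distr M S W)"
  shows "AE x in distr M S W. cond_prob B x = g x"
  by (rule law.density_unique2) (simp_all add: nn_integral_cond_prob[OF _ B] eq)

lemma AE_cond_prob_Un:
  assumes "B1 \<in> sets borel" "B2 \<in> sets borel" "B1 \<inter> B2 = {}"
  shows "AE x in distr M S W. cond_prob (B1 \<union> B2) x = cond_prob B1 x + cond_prob B2 x"
proof (rule AE_cond_prob_eqI)
  fix A assume A: "A \<in> sets S"
  have "joint A (B1 \<union> B2) = joint A B1 + joint A B2"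
  proof -
    have "{\<omega>\<in>space M. W \<omega> \<in> A \<and> T \<omega> \<in> B1 \<union> B2} =
          {\<omega>\<in>space M. W \<omega> \<in> A \<and> T \<omega> \<in> B1} \<union> {\<omega>\<in>space M. W \<omega> \<in> A \<and> T \<omega> \<in> B2}" by auto
    then show ?thesis unfolding joint_def using assms A by (subst plus_emeasure) auto
  qed
  also have "\<dots> = (\<integral>\<^sup>+x. (cond_prob B1 x + cond_prob B2 x) * indicator A x \<partial>distr M S W)"
    using assms A by (simp add: nn_integral_cond_prob[symmetric] nn_integral_add distrib_right)
  finally show "joint A (B1 \<union> B2) = \<dots>" .
qed (use assms in auto)

definition cond_cdf :: "'s \<Rightarrow> rat \<Rightarrow> ennreal" where
  "cond_cdf x q = cond_prob {..real_of_rat q} x"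

lemma borel_measurable_cond_cdf[measurable]: "(\<lambda>x. cond_cdf x q) \<in> borel_measurable S"
  unfolding cond_cdf_def by simp

lemma AE_cond_cdf_mono:
  assumes "q \<le> r"
  shows "AE x in distr M S W. cond_cdf x q \<le> cond_cdf x r"
proof -
  have "real_of_rat q \<le> real_of_rat r" using assms by (simp add: of_rat_less_eq)
  then have "{..real_of_rat r} = {..real_of_rat q} \<union> {real_of_rat q<..real_of_rat r}" by auto
  moreover have "AE x in distr M S W. cond_prob ({..real_of_rat q} \<union> {real_of_rat q<..real_of_rat r}) x =
      cond_prob {..real_of_rat q} x + cond_prob {real_of_rat q<..real_of_rat r} x"
    by (rule AE_cond_prob_Un) auto
  ultimately have "AE x in distr M S W. cond_cdf x r = cond_cdf x q + cond_prob {real_of_rat q<..real_of_rat r} x"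
    unfolding cond_cdf_def by simp
  then show ?thesis by eventually_elim simp
qed

lemma AE_cond_cdf_neg:
  assumes "q < 0"
  shows "AE x in distr M S W. cond_cdf x q = 0"
  unfolding cond_cdf_def
proof (rule AE_cond_prob_eqI)
  fix A assume "A \<in> sets S"
  have "real_of_rat q < 0" using assms by simp
  then have "\<not> T \<omega> \<le> real_of_rat q" if "\<omega> \<in> space M" for \<omega>
    using T_bounds[OF that] by linarith
  then have "{\<omega>\<in>space M. W \<omega> \<in> A \<and> T \<omega> \<in> {..real_of_rat q}} = {}" by auto
  then have "joint A {..real_of_rat q} = 0" unfolding joint_def by (simp only: emeasure_empty)
  then show "joint A {..real_of_rat q} = (\<integral>\<^sup>+x. 0 * indicator A x \<partial>distr M S W)" by simp
qed auto

lemma AE_cond_cdf_one: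
  assumes "1 \<le> q"
  shows "AE x in distr M S W. cond_cdf x q = 1"
  unfolding cond_cdf_def
proof (rule AE_cond_prob_eqI)
  fix A assume A: "A \<in> sets S"
  have "1 \<le> real_of_rat q" using assms by (metis of_rat_1 of_rat_less_eq)
  then have "T \<omega> \<le> real_of_rat q" if "\<omega> \<in> space M" for \<omega>
    using T_bounds[OF that] by linarith
  then have "joint A {..real_of_rat q} = joint A UNIV"
    unfolding joint_def by (intro arg_cong[where f="emeasure M"]) auto
  then show "joint A {..real_of_rat q} = (\<integral>\<^sup>+x. 1 * indicator A x \<partial>distr M S W)"
    using A by (simp add: joint_UNIV)
qed auto

lemma INF_joint_atMost:
  assumes A: "A \<in> sets S"
  shows "(INF m. joint A {..real_of_rat (q + 1 / of_nat (Suc m))}) = joint A {..real_of_rat q}"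
proof -
  define E where "E m = {\<omega>\<in>space M. W \<omega> \<in> A \<and> T \<omega> \<in> {..real_of_rat (q + 1 / of_nat (Suc m))}}" for m
  have "(INF m. emeasure M (E m)) = emeasure M (\<Inter>m. E m)"
  proof (rule INF_emeasure_decseq')
    show "decseq E"
      unfolding E_def by (rule decseq_SucI) (auto simp: frac_le of_rat_less_eq intro: order_trans)
  qed (use A in \<open>auto simp: E_def emeasure_finite\<close>)
  also have "(\<Inter>m. E m) = {\<omega>\<in>space M. W \<omega> \<in> A \<and> T \<omega> \<in> {..real_of_rat q}}"
  proof (intro set_eqI iffI)
    fix \<omega> assume \<omega>: "\<omega> \<in> (\<Inter>m. E m)"
    then have "\<forall>m. T \<omega> \<le> real_of_rat q + 1 / real (Suc m)"
      by (auto simp: E_def of_rat_add of_rat_divide)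
    then have "T \<omega> \<le> real_of_rat q" by (rule all_le_add_inverse_Suc_iff[THEN iffD1])
    then show "\<omega> \<in> {\<omega>\<in>space M. W \<omega> \<in> A \<and> T \<omega> \<in> {..real_of_rat q}}"
      using \<omega> unfolding E_def by auto
  next
    fix \<omega> assume "\<omega> \<in> {\<omega>\<in>space M. W \<omega> \<in> A \<and> T \<omega> \<in> {..real_of_rat q}}"
    moreover have "real_of_rat q \<le> real_of_rat (q + 1 / of_nat (Suc m))" for m
      by (simp add: of_rat_less_eq)
    ultimately show "\<omega> \<in> (\<Inter>m. E m)" unfolding E_def by (auto intro: order_trans)
  qed
  finally show ?thesis unfolding joint_def E_def .
qed

lemma AE_cond_cdf_right_cont:
  "AE x in distr M S W. cond_cdf x q = (INF m. cond_cdf x (q + 1 / of_nat (Suc m)))"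
  unfolding cond_cdf_def
proof (rule AE_cond_prob_eqI)
  fix A assume A: "A \<in> sets S"
  have "(\<integral>\<^sup>+x. (INF m. cond_prob {..real_of_rat (q + 1 / of_nat (Suc m))} x) * indicator A x \<partial>distr M S W) =
      (\<integral>\<^sup>+x. (INF m. cond_cdf x (q + 1 / of_nat (Suc m)) * indicator A x) \<partial>distr M S W)"
    by (intro nn_integral_cong) (simp add: cond_cdf_def split: split_indicator)
  also have "\<dots> = (INF m. (\<integral>\<^sup>+x. cond_cdf x (q + 1 / of_nat (Suc m)) * indicator A x \<partial>distr M S W))"
  proof (rule nn_integral_monotone_convergence_INF_AE')
    fix m
    have "q + 1 / of_nat (Suc (Suc m)) \<le> q + 1 / of_nat (Suc m)" by (simp add: frac_le)
    then have "AE x in distr M S W. cond_cdf x (q + 1 / of_nat (Suc (Suc m))) \<le> cond_cdf x (q + 1 / of_nat (Suc m))"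
      by (rule AE_cond_cdf_mono)
    then show "AE x in distr M S W. cond_cdf x (q + 1 / of_nat (Suc (Suc m))) * indicator A x
        \<le> cond_cdf x (q + 1 / of_nat (Suc m)) * indicator A x"
      by eventually_elim (simp add: mult_right_mono)
  next
    show "(\<integral>\<^sup>+x. cond_cdf x (q + 1 / of_nat (Suc 0)) * indicator A x \<partial>distr M S W) < \<infinity>"
      using A joint_finite by (simp add: cond_cdf_def nn_integral_cond_prob less_top[symmetric])
  qed (use A in \<open>simp add: cond_cdf_def\<close>)
  also have "\<dots> = joint A {..real_of_rat q}"
    using A INF_joint_atMost[OF A] by (simp add: cond_cdf_def nn_integral_cond_prob)
  finally show "joint A {..real_of_rat q} =
      (\<integral>\<^sup>+x. (INF m. cond_prob {..real_of_rat (q + 1 / of_nat (Suc m))} x) * indicator A x \<partial>distr M S W)"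
    by simp
qed auto

lemma AE_unit_rat_cdf_cond_cdf: "AE x in distr M S W. unit_rat_cdf (cond_cdf x)"
proof -
  have "AE x in distr M S W. \<forall>q r. q \<le> r \<longrightarrow> cond_cdf x q \<le> cond_cdf x r"
    by (intro AE_all_countable[THEN iffD2] allI) (metis (mono_tags, lifting) AE_cond_cdf_mono AE_mp AE_I2)
  moreover have "AE x in distr M S W. \<forall>q. q < 0 \<longrightarrow> cond_cdf x q = 0"
    by (intro AE_all_countable[THEN iffD2] allI) (metis (mono_tags, lifting) AE_cond_cdf_neg AE_mp AE_I2)
  moreover have "AE x in distr M S W. \<forall>q. 1 \<le> q \<longrightarrow> cond_cdf x q = 1"
    by (intro AE_all_countable[THEN iffD2] allI) (metis (mono_tags, lifting) AE_cond_cdf_one AE_mp AE_I2)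
  moreover have "AE x in distr M S W. \<forall>q. cond_cdf x q = (INF m. cond_cdf x (q + 1 / of_nat (Suc m)))"
    by (intro AE_all_countable[THEN iffD2] allI AE_cond_cdf_right_cont)
  ultimately show ?thesis unfolding unit_rat_cdf_def mono_def by eventually_elim blast
qed

text \<open>Off the null set where cond_cdf x fails to be a distribution function, any probability
  measure will do.\<close>

definition cond_kernel :: "'s \<Rightarrow> real measure" where
  "cond_kernel x = (if unit_rat_cdf (cond_cdf x)
     then distr (uniform_measure lborel {0<..1}) borel (rat_quantile (cond_cdf x)) else return borel 0)"

lemma sets_cond_kernel[simp]: "sets (cond_kernel x) = sets borel"
  by (simp add: cond_kernel_def)

lemma emeasure_cond_kernel_atMost:
  "emeasure (cond_kernel x) {..real_of_rat q} =
     (if unit_rat_cdf (cond_cdf x) then cond_cdf x q else indicator {..real_of_rat q} 0)"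
  by (simp add: cond_kernel_def emeasure_distr_rat_quantile)

lemma measurable_cond_kernel: "cond_kernel \<in> S \<rightarrow>\<^sub>M prob_algebra borel"
proof (rule measurable_prob_algebra_generated[OF sets_borel_eq_sigma_rat_atMost Int_stable_rat_atMost])
  show "prob_space (cond_kernel x)" for x
    by (simp add: cond_kernel_def prob_space_distr_rat_quantile prob_space_return)
  have [measurable]: "Measurable.pred S (\<lambda>x. unit_rat_cdf (cond_cdf x))"
    unfolding unit_rat_cdf_def mono_def by measurable
  show "(\<lambda>x. emeasure (cond_kernel x) A) \<in> borel_measurable S"
    if A: "A \<in> range (\<lambda>q::rat. {..real_of_rat q})" for A
  proof -
    obtain q where q: "A = {..real_of_rat q}" using A by blast
    show ?thesis unfolding q emeasure_cond_kernel_atMost by measurable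
  qed
qed (auto simp: cond_kernel_def)

lemma joint_eq_nn_integral_cond_kernel:
  assumes A: "A \<in> sets S" and B: "B \<in> sets borel"
  shows "joint A B = (\<integral>\<^sup>+x. indicator A x * emeasure (cond_kernel x) B \<partial>distr M S W)"
proof -
  define L where "L = distr (density M (\<lambda>\<omega>. indicator A (W \<omega>))) borel T"
  define R where "R = density (distr M S W) (indicator A) \<bind> cond_kernel"
  have space_S: "space S \<noteq> {}" using law.not_empty by simp
  have K: "cond_kernel \<in> density (distr M S W) (indicator A) \<rightarrow>\<^sub>M subprob_algebra borel"
    using measurable_prob_algebraD[OF measurable_cond_kernel] by (simp cong: measurable_cong_sets)
  have L: "emeasure L B' = joint A B'" if B': "B' \<in> sets borel" for B'
  proof -
    have "emeasure L B' = (\<integral>\<^sup>+\<omega>. indicator A (W \<omega>) * indicator (T -` B' \<inter> space M) \<omega> \<partial>M)"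
      unfolding L_def using A B' by (simp add: emeasure_distr emeasure_density)
    also have "\<dots> = (\<integral>\<^sup>+\<omega>. indicator {\<omega>\<in>space M. W \<omega> \<in> A \<and> T \<omega> \<in> B'} \<omega> \<partial>M)"
      by (intro nn_integral_cong) (auto split: split_indicator)
    finally show ?thesis unfolding joint_def using A B' by simp
  qed
  have R: "emeasure R B' = (\<integral>\<^sup>+x. indicator A x * emeasure (cond_kernel x) B' \<partial>distr M S W)"
    if B': "B' \<in> sets borel" for B'
  proof -
    have "(\<lambda>x. emeasure (cond_kernel x) B') \<in> borel_measurable S"
      using measurable_emeasure_kernel[OF measurable_prob_algebraD[OF measurable_cond_kernel] B'] .
    then show ?thesis
      unfolding R_def using B' space_S A
      by (subst emeasure_bind[OF _ K]) (auto simp: nn_integral_density cong: measurable_cong_sets)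
  qed
  have "L = R"
  proof (rule measure_eqI_rat_atMost)
    show "emeasure L {..real_of_rat q} = emeasure R {..real_of_rat q}" for q
    proof -
      have "emeasure L {..real_of_rat q} = (\<integral>\<^sup>+x. cond_cdf x q * indicator A x \<partial>distr M S W)"
        using A by (simp add: L nn_integral_cond_prob cond_cdf_def)
      also have "\<dots> = (\<integral>\<^sup>+x. indicator A x * emeasure (cond_kernel x) {..real_of_rat q} \<partial>distr M S W)"
        using AE_unit_rat_cdf_cond_cdf
        by (intro nn_integral_cong_AE, eventually_elim) (simp add: emeasure_cond_kernel_atMost mult.commute)
      finally show ?thesis using R by simp
    qed
    show "sets R = sets borel"
      unfolding R_def using space_S by (subst sets_bind[where N=borel]) auto
    show "emeasure L {..real_of_rat q} \<noteq> \<infinity>" for q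
      using L[of "{..real_of_rat q}"] joint_finite by simp
  qed (simp add: L_def)
  then show ?thesis using L[OF B] R[OF B] by simp
qed

end

lemma cond_distr_kernel_exists_unit_interval:
  fixes T :: "'w \<Rightarrow> real"
  assumes "prob_space M" "W \<in> M \<rightarrow>\<^sub>M S" "T \<in> borel_measurable M"
    and "\<And>\<omega>. \<omega> \<in> space M \<Longrightarrow> 0 \<le> T \<omega> \<and> T \<omega> \<le> 1"
  obtains K where "cond_distr_kernel M S borel W T K"
proof -
  interpret unit_valued_disintegration M S W T
    using assms unfolding unit_valued_disintegration_def unit_valued_disintegration_axioms_def by blast
  have "cond_distr_kernel M S borel W T cond_kernel"
    by (rule cond_distr_kernel_of_rectangles[OF assms(1-3) measurable_cond_kernel])
      (simp add: joint_eq_nn_integral_cond_kernel[unfolded joint_def])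
  then show ?thesis by (rule that)
qed

lemma cond_distr_kernel_exists:
  fixes S :: "'s measure" and V :: "'w \<Rightarrow> 'a::euclidean_space"
  assumes M: "prob_space M" and W[measurable]: "W \<in> M \<rightarrow>\<^sub>M S" and V[measurable]: "V \<in> borel_measurable M"
  obtains K where "cond_distr_kernel M S borel W V K"
proof -
  obtain \<phi> :: "'a \<Rightarrow> real" and \<psi> where [measurable]: "\<phi> \<in> borel_measurable borel" "\<psi> \<in> borel_measurable borel"
    and \<phi>_bounds: "\<And>a. 0 \<le> \<phi> a \<and> \<phi> a \<le> 1" and \<psi>_\<phi>: "\<And>a. \<psi> (\<phi> a) = a"
    using borel_embedding_into_unit_interval by blast
  obtain K where K: "cond_distr_kernel M S borel W (\<lambda>\<omega>. \<phi> (V \<omega>)) K"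
    using cond_distr_kernel_exists_unit_interval[OF M W, of "\<lambda>\<omega>. \<phi> (V \<omega>)"] \<phi>_bounds by auto
  note K_meas[measurable] = cond_distr_kernelD(1)[OF K]
  have K_sets: "sets (K x) = sets borel" if "x \<in> space S" for x
    using measurable_space[OF K_meas that] by (simp add: space_prob_algebra)
  have "cond_distr_kernel M S borel W V (\<lambda>x. distr (K x) borel \<psi>)"
    unfolding cond_distr_kernel_def
  proof (intro conjI ballI)
    show "(\<lambda>x. distr (K x) borel \<psi>) \<in> S \<rightarrow>\<^sub>M prob_algebra borel"
      by (rule measurable_distr_prob_space2[OF K_meas]) simp
    fix g :: "'s \<times> 'a \<Rightarrow> ennreal" assume [measurable]: "g \<in> borel_measurable (S \<Otimes>\<^sub>M borel)"
    have "(\<integral>\<^sup>+\<omega>. g (W \<omega>, V \<omega>) \<partial>M) = (\<integral>\<^sup>+\<omega>. g (W \<omega>, \<psi> (\<phi> (V \<omega>))) \<partial>M)"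
      by (simp add: \<psi>_\<phi>)
    also have "\<dots> = (\<integral>\<^sup>+x. \<integral>\<^sup>+y. g (x, \<psi> y) \<partial>K x \<partial>distr M S W)"
      using cond_distr_kernelD(2)[OF K, of "\<lambda>(x, y). g (x, \<psi> y)"] by simp
    also have "\<dots> = (\<integral>\<^sup>+x. \<integral>\<^sup>+y. g (x, y) \<partial>distr (K x) borel \<psi> \<partial>distr M S W)"
      by (intro nn_integral_cong, subst nn_integral_distr)
        (auto simp: K_sets measurable_cong_sets[OF K_sets refl])
    finally show "(\<integral>\<^sup>+\<omega>. g (W \<omega>, V \<omega>) \<partial>M) = \<dots>" .
  qed
  then show ?thesis by (rule that)
qed

lemma emeasure_distr_eq_nn_integral:
  assumes "f \<in> M \<rightarrow>\<^sub>M N" "B \<in> sets N"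
  shows "emeasure (distr M N f) B = (\<integral>\<^sup>+x. indicator B (f x) \<partial>M)"
  using assms nn_integral_distr[OF assms(1), of "indicator B"] by simp

lemma bind_cond_distr_kernel:
  assumes K: "cond_distr_kernel M S T W V K" and "prob_space M"
    and [measurable]: "W \<in> M \<rightarrow>\<^sub>M S" "V \<in> M \<rightarrow>\<^sub>M T"
  shows "distr M S W \<bind> K = distr M T V"
proof -
  note K_meas[measurable] = cond_distr_kernelD(1)[OF K]
  have space_S: "space (distr M S W) \<noteq> {}"
    using prob_space.not_empty[OF \<open>prob_space M\<close>] measurable_space[of W M S] by auto
  have K': "K \<in> distr M S W \<rightarrow>\<^sub>M subprob_algebra T"
    using measurable_prob_algebraD[OF K_meas] by (simp cong: measurable_cong_sets)
  show ?thesis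
  proof (rule measure_eqI)
    show "sets (distr M S W \<bind> K) = sets (distr M T V)"
      by (simp add: sets_bind_measurable[OF K' space_S])
    fix B assume "B \<in> sets (distr M S W \<bind> K)"
    then have B[measurable]: "B \<in> sets T" using sets_bind_measurable[OF K' space_S] by simp
    have K_sets: "sets (K x) = sets T" if "x \<in> space S" for x
      using measurable_space[OF K_meas that] by (simp add: space_prob_algebra)
    have "emeasure (distr M S W \<bind> K) B = (\<integral>\<^sup>+x. \<integral>\<^sup>+y. indicator B y \<partial>K x \<partial>distr M S W)"
      using emeasure_bind[OF space_S K' B] by (auto intro!: nn_integral_cong simp: K_sets)
    also have "\<dots> = (\<integral>\<^sup>+\<omega>. indicator B (V \<omega>) \<partial>M)"
      using cond_distr_kernelD(2)[OF K, of "\<lambda>(x, y). indicator B y"] by simp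
    also have "\<dots> = emeasure (distr M T V) B" by (simp add: emeasure_distr_eq_nn_integral)
    finally show "emeasure (distr M S W \<bind> K) B = emeasure (distr M T V) B" .
  qed
qed

lemma nn_integral_cond_distr_kernel_indicator:
  assumes K: "cond_distr_kernel M S T W V K"
    and [measurable]: "W \<in> M \<rightarrow>\<^sub>M S" "A \<in> sets S" "G \<in> borel_measurable T"
  shows "(\<integral>\<^sup>+\<omega>. indicator A (W \<omega>) * G (V \<omega>) \<partial>M) = (\<integral>\<^sup>+\<omega>. indicator A (W \<omega>) * (\<integral>\<^sup>+y. G y \<partial>K (W \<omega>)) \<partial>M)"
proof -
  note K_meas[measurable] = cond_distr_kernelD(1)[OF K]
  note [measurable] = measurable_prob_algebraD[OF K_meas]
  have K_sets: "sets (K x) = sets T" if "x \<in> space S" for x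
    using measurable_space[OF K_meas that] by (simp add: space_prob_algebra)
  have "(\<integral>\<^sup>+\<omega>. indicator A (W \<omega>) * G (V \<omega>) \<partial>M) = (\<integral>\<^sup>+x. \<integral>\<^sup>+y. indicator A x * G y \<partial>K x \<partial>distr M S W)"
    using cond_distr_kernelD(2)[OF K, of "\<lambda>(x, y). indicator A x * G y"] by simp
  also have "\<dots> = (\<integral>\<^sup>+x. indicator A x * (\<integral>\<^sup>+y. G y \<partial>K x) \<partial>distr M S W)"
    by (intro nn_integral_cong nn_integral_cmult) (simp add: measurable_cong_sets[OF K_sets refl])
  also have "\<dots> = (\<integral>\<^sup>+\<omega>. indicator A (W \<omega>) * (\<integral>\<^sup>+y. G y \<partial>K (W \<omega>)) \<partial>M)"
    by (subst nn_integral_distr) auto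
  finally show ?thesis .
qed

section \<open>Markov chains on the path space\<close>

lemma space_nat_filtr[simp]: "space (nat_filtr M X i) = space M"
  unfolding nat_filtr_def by (simp add: space_measure_of_conv)

lemma sets_nat_filtr:
  "sets (nat_filtr M X i) = sigma_sets (space M) (\<Union>j\<in>{1..i}. {X j -` A \<inter> space M | A. A \<in> sets borel})"
  unfolding nat_filtr_def by (rule sets_measure_of) blast

lemma measurable_nat_filtr:
  fixes X :: "nat \<Rightarrow> 'w \<Rightarrow> 'a::topological_space"
  assumes "j \<in> {1..i}"
  shows "X j \<in> nat_filtr M X i \<rightarrow>\<^sub>M borel"
proof (rule measurableI)
  fix A :: "'a set" assume "A \<in> sets borel"
  then have "X j -` A \<inter> space M \<in> (\<Union>j\<in>{1..i}. {X j -` A \<inter> space M | A. A \<in> sets borel})"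
    using assms by (intro UN_I[of j]) auto
  then show "X j -` A \<inter> space (nat_filtr M X i) \<in> sets (nat_filtr M X i)"
    unfolding sets_nat_filtr space_nat_filtr by (rule sigma_sets.Basic)
qed simp

lemma sets_vimage_algebra_subset_nat_filtr:
  assumes "1 \<le> i"
  shows "sets (vimage_algebra (space M) (X i) borel) \<subseteq> sets (nat_filtr M X i)"
proof
  fix E assume "E \<in> sets (vimage_algebra (space M) (X i) borel)"
  then obtain A where "A \<in> sets borel" "E = X i -` A \<inter> space M" by (auto simp: sets_vimage_algebra2)
  then have "E \<in> (\<Union>j\<in>{1..i}. {X j -` A \<inter> space M | A. A \<in> sets borel})"
    using assms by (intro UN_I[of i]) auto
  then show "E \<in> sets (nat_filtr M X i)" unfolding sets_nat_filtr by (rule sigma_sets.Basic)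
qed

lemma subalgebra_nat_filtr:
  assumes "\<And>j. j \<in> {1..i} \<Longrightarrow> X j \<in> borel_measurable M"
  shows "subalgebra M (nat_filtr M X i)"
  unfolding subalgebra_def sets_nat_filtr
proof (intro conjI sets.sigma_sets_subset)
  show "(\<Union>j\<in>{1..i}. {X j -` A \<inter> space M | A. A \<in> sets borel}) \<subseteq> sets M"
  proof (intro UN_least subsetI)
    fix j E assume "j \<in> {1..i}" "E \<in> {X j -` A \<inter> space M | A. A \<in> sets borel}"
    then show "E \<in> sets M" using assms measurable_sets by blast
  qed
qed simp

lemma nat_filtr_coordinates_fun_upd:
  assumes space: "space M = UNIV" and E: "E \<in> sets (nat_filtr M (\<lambda>i f. f i) i)" and "i < m"
  shows "f(m := y) \<in> E \<longleftrightarrow> f \<in> E"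
  using E[unfolded sets_nat_filtr]
proof (induction arbitrary: f rule: sigma_sets.induct)
  case (Basic a)
  then show ?case using \<open>i < m\<close> by (auto simp: space)
qed (auto simp: space)

abbreviation path_space :: "(nat \<Rightarrow> 'a::topological_space) measure" where
  "path_space \<equiv> PiM UNIV (\<lambda>_. borel)"

lemma space_path_space: "space path_space = UNIV"
  by (simp add: space_PiM)

lemma measurable_path_fun_upd:
  "(\<lambda>(f, y). f(i := y)) \<in> path_space \<Otimes>\<^sub>M borel \<rightarrow>\<^sub>M (path_space :: (nat \<Rightarrow> 'a::topological_space) measure)"
  using measurable_add_dim[of i UNIV "\<lambda>_. borel :: 'a measure"] by simp

text \<open>Coordinate Suc j is drawn from K j at coordinate j. Coordinate 0 is a fixed dummy start,
  so K 0 is the initial distribution; coordinates beyond k stay at the dummy value.\<close>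

primrec markov_chain :: "(nat \<Rightarrow> 'a \<Rightarrow> 'a measure) \<Rightarrow> nat \<Rightarrow> (nat \<Rightarrow> 'a::topological_space) measure"
  where
    "markov_chain K 0 = return path_space (\<lambda>_. undefined)"
  | "markov_chain K (Suc k) = markov_chain K k \<bind> (\<lambda>f. distr (K k (f k)) path_space (\<lambda>y. f(Suc k := y)))"

context
  fixes K :: "nat \<Rightarrow> 'a::topological_space \<Rightarrow> 'a measure"
  assumes K: "\<And>k. K k \<in> borel \<rightarrow>\<^sub>M prob_algebra borel"
begin

lemma sets_markov_kernel[simp]: "sets (K k x) = sets borel"
  and prob_space_markov_kernel: "prob_space (K k x)"
  using measurable_space[OF K[of k], of x] by (auto simp: space_prob_algebra)

lemma measurable_markov_kernel_subprob_algebra: "K k \<in> borel \<rightarrow>\<^sub>M subprob_algebra borel"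
  using measurable_prob_algebraD[OF K] .

lemma measurable_markov_chain_step:
  "(\<lambda>f. distr (K k (f k)) path_space (\<lambda>y. f(Suc k := y))) \<in> path_space \<rightarrow>\<^sub>M prob_algebra path_space"
proof (rule measurable_distr_prob_space2[where f="\<lambda>f y. f(Suc k := y)"])
  show "(\<lambda>f. K k (f k)) \<in> path_space \<rightarrow>\<^sub>M prob_algebra borel"
    using measurable_compose[OF measurable_component_singleton[of k UNIV "\<lambda>_. borel"] K[of k]] by simp
qed (rule measurable_path_fun_upd)

lemma markov_chain_in_prob_algebra: "markov_chain K k \<in> space (prob_algebra path_space)"
proof (induction k)
  case (Suc k)
  then show ?case
    using prob_space_bind'[OF Suc measurable_markov_chain_step] sets_bind'[OF Suc measurable_markov_chain_step]
    by (simp add: space_prob_algebra)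
qed (simp add: space_prob_algebra prob_space_return space_path_space)

lemma prob_space_markov_chain: "prob_space (markov_chain K k)"
  and sets_markov_chain[simp, measurable_cong]: "sets (markov_chain K k) = sets path_space"
  using markov_chain_in_prob_algebra[of k] by (auto simp: space_prob_algebra)

lemma space_markov_chain[simp]: "space (markov_chain K k) = UNIV"
  using sets_eq_imp_space_eq[OF sets_markov_chain] by (simp add: space_path_space)

lemma measurable_markov_chain_coordinate: "(\<lambda>f. f i) \<in> markov_chain K k \<rightarrow>\<^sub>M borel"
  using measurable_component_singleton[of i UNIV "\<lambda>_. borel :: 'a measure"]
  by (simp cong: measurable_cong_sets)

lemma nn_integral_markov_chain_Suc:
  assumes [measurable]: "G \<in> borel_measurable path_space"
  shows "(\<integral>\<^sup>+f. G f \<partial>markov_chain K (Suc k)) =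
    (\<integral>\<^sup>+f. \<integral>\<^sup>+y. G (f(Suc k := y)) \<partial>K k (f k) \<partial>markov_chain K k)"
proof -
  have step: "(\<lambda>f. distr (K k (f k)) path_space (\<lambda>y. f(Suc k := y))) \<in> markov_chain K k \<rightarrow>\<^sub>M subprob_algebra path_space"
    using measurable_prob_algebraD[OF measurable_markov_chain_step] by (simp cong: measurable_cong_sets)
  have upd: "(\<lambda>y. f(Suc k := y)) \<in> K k (f k) \<rightarrow>\<^sub>M path_space" for f
    unfolding measurable_cong_sets[OF sets_markov_kernel refl]
    by (rule measurable_fun_upd[where J=UNIV]) (auto simp: space_path_space)
  show ?thesis
    by (simp add: nn_integral_bind[OF _ step] nn_integral_distr[OF upd])
qed

lemma nn_integral_markov_chain_eq:
  assumes G[measurable]: "G \<in> borel_measurable path_space"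
    and G_upd: "\<And>f y m. k < m \<Longrightarrow> G (f(m := y)) = G f"
    and "k \<le> m"
  shows "(\<integral>\<^sup>+f. G f \<partial>markov_chain K m) = (\<integral>\<^sup>+f. G f \<partial>markov_chain K k)"
  using \<open>k \<le> m\<close>
proof (induction m rule: dec_induct)
  case (step m)
  have "(\<integral>\<^sup>+f. G f \<partial>markov_chain K (Suc m)) =
      (\<integral>\<^sup>+f. \<integral>\<^sup>+y. G (f(Suc m := y)) \<partial>K m (f m) \<partial>markov_chain K m)"
    by (rule nn_integral_markov_chain_Suc[OF G])
  also have "\<dots> = (\<integral>\<^sup>+f. \<integral>\<^sup>+y. G f \<partial>K m (f m) \<partial>markov_chain K m)"
    using step G_upd by simp
  also have "\<dots> = (\<integral>\<^sup>+f. G f \<partial>markov_chain K m)"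
    by (simp add: prob_space.emeasure_space_1[OF prob_space_markov_kernel])
  finally show ?case using step by simp
qed simp

lemma distr_markov_chain_coordinate:
  assumes "j \<le> m"
  shows "distr (markov_chain K m) borel (\<lambda>f. f j) = distr (markov_chain K j) borel (\<lambda>f. f j)"
proof (rule measure_eqI)
  fix B :: "'a set" assume "B \<in> sets (distr (markov_chain K m) borel (\<lambda>f. f j))"
  then have [measurable]: "B \<in> sets borel" by simp
  have "(\<integral>\<^sup>+f. indicator B (f j) \<partial>markov_chain K m) = (\<integral>\<^sup>+f. indicator B (f j) \<partial>markov_chain K j)"
    using assms by (intro nn_integral_markov_chain_eq) auto
  then show "emeasure (distr (markov_chain K m) borel (\<lambda>f. f j)) B =
      emeasure (distr (markov_chain K j) borel (\<lambda>f. f j)) B"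
    by (simp add: emeasure_distr_eq_nn_integral)
qed simp

lemma distr_markov_chain_Suc_coordinate:
  "distr (markov_chain K (Suc j)) borel (\<lambda>f. f (Suc j)) = distr (markov_chain K j) borel (\<lambda>f. f j) \<bind> K j"
proof (rule measure_eqI)
  have K': "K j \<in> distr (markov_chain K j) borel (\<lambda>f. f j) \<rightarrow>\<^sub>M subprob_algebra borel"
    using measurable_prob_algebraD[OF K[of j]] by (simp cong: measurable_cong_sets)
  show "sets (distr (markov_chain K (Suc j)) borel (\<lambda>f. f (Suc j))) =
      sets (distr (markov_chain K j) borel (\<lambda>f. f j) \<bind> K j)"
    by (simp add: sets_bind_measurable[OF K'])
  fix B :: "'a set" assume "B \<in> sets (distr (markov_chain K (Suc j)) borel (\<lambda>f. f (Suc j)))"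
  then have B[measurable]: "B \<in> sets borel" by simp
  have "emeasure (distr (markov_chain K (Suc j)) borel (\<lambda>f. f (Suc j))) B =
      (\<integral>\<^sup>+f. indicator B (f (Suc j)) \<partial>markov_chain K (Suc j))"
    by (simp add: emeasure_distr_eq_nn_integral)
  also have "\<dots> = (\<integral>\<^sup>+f. \<integral>\<^sup>+y. indicator B ((f(Suc j := y)) (Suc j)) \<partial>K j (f j) \<partial>markov_chain K j)"
    by (rule nn_integral_markov_chain_Suc) measurable
  also have "\<dots> = (\<integral>\<^sup>+f. emeasure (K j (f j)) B \<partial>markov_chain K j)"
    by simp
  also have "\<dots> = (\<integral>\<^sup>+x. emeasure (K j x) B \<partial>distr (markov_chain K j) borel (\<lambda>f. f j))"
    using measurable_emeasure_kernel[OF measurable_prob_algebraD[OF K[of j]] B]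
    by (subst nn_integral_distr) auto
  also have "\<dots> = emeasure (distr (markov_chain K j) borel (\<lambda>f. f j) \<bind> K j) B"
    by (subst emeasure_bind[OF _ K' B]) auto
  finally show "emeasure (distr (markov_chain K (Suc j)) borel (\<lambda>f. f (Suc j))) B = \<dots>" .
qed

lemma nn_integral_markov_chain_transition:
  assumes "i < n" and E: "E \<in> sets (nat_filtr (markov_chain K n) (\<lambda>i f. f i) i)"
    and G[measurable]: "G \<in> borel_measurable borel"
  shows "(\<integral>\<^sup>+f. indicator E f * G (f (Suc i)) \<partial>markov_chain K n) =
    (\<integral>\<^sup>+f. indicator E f * (\<integral>\<^sup>+y. G y \<partial>K i (f i)) \<partial>markov_chain K n)"
proof -
  note [measurable] = measurable_markov_kernel_subprob_algebra
  have [measurable]: "E \<in> sets path_space"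
    using subalgebra_nat_filtr[of i "\<lambda>i f. f i" "markov_chain K n"] E
    by (auto simp: subalgebra_def measurable_markov_chain_coordinate)
  have E_upd: "f(m := y) \<in> E \<longleftrightarrow> f \<in> E" if "i < m" for f y m
    using nat_filtr_coordinates_fun_upd[OF space_markov_chain E that] .
  have "(\<integral>\<^sup>+f. indicator E f * G (f (Suc i)) \<partial>markov_chain K n) =
      (\<integral>\<^sup>+f. indicator E f * G (f (Suc i)) \<partial>markov_chain K (Suc i))"
    using \<open>i < n\<close> E_upd by (intro nn_integral_markov_chain_eq) (auto split: split_indicator)
  also have "\<dots> = (\<integral>\<^sup>+f. \<integral>\<^sup>+y. indicator E (f(Suc i := y)) * G y \<partial>K i (f i) \<partial>markov_chain K i)"
    by (subst nn_integral_markov_chain_Suc) auto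
  also have "\<dots> = (\<integral>\<^sup>+f. indicator E f * (\<integral>\<^sup>+y. G y \<partial>K i (f i)) \<partial>markov_chain K i)"
  proof (rule nn_integral_cong)
    fix f :: "nat \<Rightarrow> 'a"
    have "G \<in> borel_measurable (K i (f i))" using G unfolding measurable_cong_sets[OF sets_markov_kernel refl] .
    moreover have "indicator E (f(Suc i := y)) = (indicator E f :: ennreal)" for y
      using E_upd[of "Suc i" f] by (simp add: indicator_def)
    ultimately show "(\<integral>\<^sup>+y. indicator E (f(Suc i := y)) * G y \<partial>K i (f i)) =
        indicator E f * (\<integral>\<^sup>+y. G y \<partial>K i (f i))"
      by (simp add: nn_integral_cmult)
  qed
  also have "\<dots> = (\<integral>\<^sup>+f. indicator E f * (\<integral>\<^sup>+y. G y \<partial>K i (f i)) \<partial>markov_chain K n)"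
    using \<open>i < n\<close> E_upd by (intro nn_integral_markov_chain_eq[symmetric]) (auto split: split_indicator)
  finally show ?thesis .
qed

lemma measurable_measure_markov_kernel:
  assumes "B \<in> sets borel"
  shows "(\<lambda>x. measure (K i x) B) \<in> borel_measurable borel"
  unfolding measure_def using measurable_emeasure_kernel[OF measurable_prob_algebraD[OF K] assms] by simp

lemma set_integral_markov_chain_indicator:
  assumes "i < n" and A: "A \<in> sets (nat_filtr (markov_chain K n) (\<lambda>i f. f i) i)"
    and B[measurable]: "B \<in> sets borel"
  shows "(\<integral>f\<in>A. indicator B (f (Suc i)) \<partial>markov_chain K n) = (\<integral>f\<in>A. measure (K i (f i)) B \<partial>markov_chain K n)"
proof -
  note [measurable] = measurable_markov_chain_coordinate measurable_measure_markov_kernel[OF B]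
  have [measurable]: "A \<in> sets (markov_chain K n)"
    using subalgebra_nat_filtr[of i "\<lambda>i f. f i" "markov_chain K n"] A
    by (auto simp: subalgebra_def measurable_markov_chain_coordinate)
  have "(\<integral>\<^sup>+f. indicator A f * indicator B (f (Suc i)) \<partial>markov_chain K n) =
      (\<integral>\<^sup>+f. indicator A f * emeasure (K i (f i)) B \<partial>markov_chain K n)"
    using nn_integral_markov_chain_transition[OF \<open>i < n\<close> A, of "indicator B"] by simp
  then have "(\<integral>\<^sup>+f. ennreal (indicator A f * indicator B (f (Suc i))) \<partial>markov_chain K n) =
      (\<integral>\<^sup>+f. ennreal (indicator A f * measure (K i (f i)) B) \<partial>markov_chain K n)"
    by (simp add: ennreal_mult' ennreal_indicator
        finite_measure.emeasure_eq_measure[OF prob_space.finite_measure[OF prob_space_markov_kernel]])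
  then show ?thesis
    unfolding set_lebesgue_integral_def by (simp add: integral_eq_nn_integral)
qed

end

lemma AE_real_cond_exp_eqI:
  assumes "prob_space M" and F: "subalgebra M F" and "integrable M f" "integrable M g"
    and g: "g \<in> borel_measurable F"
    and eq: "\<And>A. A \<in> sets F \<Longrightarrow> (\<integral>x\<in>A. f x \<partial>M) = (\<integral>x\<in>A. g x \<partial>M)"
  shows "AE x in M. real_cond_exp M F f x = g x"
proof -
  interpret prob_space M by fact
  interpret finite_measure_subalgebra M F by unfold_locales (rule F)
  show ?thesis by (rule real_cond_exp_charact[OF eq assms(3,4) g])
qed

lemma AE_real_cond_exp_eq_iff:
  assumes "prob_space M" and F: "subalgebra M F" and f: "integrable M f" and "integrable M g"
    and g: "g \<in> borel_measurable F"
  shows "(AE x in M. real_cond_exp M F f x = g x) \<longleftrightarrow> (\<forall>A\<in>sets F. (\<integral>x\<in>A. f x \<partial>M) = (\<integral>x\<in>A. g x \<partial>M))"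
proof
  interpret prob_space M by fact
  interpret F: finite_measure_subalgebra M F by unfold_locales (rule F)
  assume AE: "AE x in M. real_cond_exp M F f x = g x"
  show "\<forall>A\<in>sets F. (\<integral>x\<in>A. f x \<partial>M) = (\<integral>x\<in>A. g x \<partial>M)"
  proof
    fix A assume A: "A \<in> sets F"
    then have "A \<in> sets M" using F by (auto simp: subalgebra_def)
    have "(\<integral>x\<in>A. f x \<partial>M) = (\<integral>x\<in>A. real_cond_exp M F f x \<partial>M)"
      by (rule F.real_cond_exp_intA[OF f A])
    also have "\<dots> = (\<integral>x\<in>A. g x \<partial>M)"
      using AE \<open>A \<in> sets M\<close> measurable_from_subalg[OF F g]
      by (intro set_lebesgue_integral_cong_AE) auto
    finally show "(\<integral>x\<in>A. f x \<partial>M) = (\<integral>x\<in>A. g x \<partial>M)" .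
  qed
qed (use AE_real_cond_exp_eqI[OF assms] in blast)

lemma AE_real_cond_exp_eq_coarser:
  assumes M: "prob_space M" and F: "subalgebra M F" and G: "subalgebra M G" and "sets G \<subseteq> sets F"
    and "integrable M f" "integrable M g" and g: "g \<in> borel_measurable G"
    and eq: "\<And>A. A \<in> sets F \<Longrightarrow> (\<integral>x\<in>A. f x \<partial>M) = (\<integral>x\<in>A. g x \<partial>M)"
  shows "AE x in M. real_cond_exp M F f x = real_cond_exp M G f x"
proof -
  have "subalgebra F G" using F G \<open>sets G \<subseteq> sets F\<close> by (simp add: subalgebra_def)
  then have "g \<in> borel_measurable F" by (rule measurable_from_subalg[OF _ g])
  then have "AE x in M. real_cond_exp M F f x = g x"
    by (rule AE_real_cond_exp_eqI[OF M F assms(5,6) _ eq])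
  moreover have "AE x in M. real_cond_exp M G f x = g x"
    using \<open>sets G \<subseteq> sets F\<close> G by (intro AE_real_cond_exp_eqI[OF M G assms(5,6) g eq]) auto
  ultimately show ?thesis by eventually_elim simp
qed

lemma markov_markov_chain:
  assumes K: "\<And>k. K k \<in> borel \<rightarrow>\<^sub>M prob_algebra borel"
  shows "markov (markov_chain K n) (\<lambda>i f. f i) n"
  unfolding markov_def
proof (intro allI impI ballI)
  fix i :: nat and B :: "'a::topological_space set"
  assume i: "1 \<le> i \<and> i < n" and B[measurable]: "B \<in> sets borel"
  let ?N = "markov_chain K n" and ?F = "nat_filtr (markov_chain K n) (\<lambda>i f. f i) i"
    and ?G = "vimage_algebra (space (markov_chain K n)) (\<lambda>f. f i) borel"
  define g where "g = (\<lambda>f. indicator B (f (Suc i)) :: real)"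
  define h where "h = (\<lambda>f. measure (K i (f i)) B)"
  interpret N: prob_space ?N by (rule prob_space_markov_chain[where K=K, OF K])
  note [measurable] = measurable_markov_chain_coordinate[where K=K, OF K]
    measurable_measure_markov_kernel[where K=K, OF K B]
  have g_eq: "indicator ((\<lambda>f. f (Suc i)) -` B \<inter> space ?N) = g"
    by (auto simp: g_def fun_eq_iff space_markov_chain[where K=K, OF K] split: split_indicator)
  have [measurable]: "g \<in> borel_measurable ?N" "h \<in> borel_measurable ?N"
    unfolding g_def h_def by measurable
  have "norm (g f) \<le> 1" "norm (h f) \<le> 1" for f
    using prob_space.prob_le_1[OF prob_space_markov_kernel[where K=K, OF K]] by (simp_all add: g_def h_def)
  then have integrable: "integrable ?N g" "integrable ?N h"
    by (auto intro!: N.integrable_const_bound[OF AE_I2])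
  have sub_F: "subalgebra ?N ?F" by (rule subalgebra_nat_filtr) simp
  have sub_G: "subalgebra ?N ?G"
    unfolding subalgebra_def using sets_image_in_sets[of ?N "space ?N" "\<lambda>f. f i" borel] by simp
  have eq: "(\<integral>f\<in>A. g f \<partial>?N) = (\<integral>f\<in>A. h f \<partial>?N)" if "A \<in> sets ?F" for A
    unfolding g_def h_def using set_integral_markov_chain_indicator[where K=K, OF K _ that B] i by simp
  have "h \<in> borel_measurable ?G"
    using measurable_compose[OF measurable_vimage_algebra1 measurable_measure_markov_kernel[where K=K, OF K B]]
    by (simp add: h_def)
  then have "AE f in ?N. real_cond_exp ?N ?F g f = real_cond_exp ?N ?G g f"
    using sets_vimage_algebra_subset_nat_filtr[of i ?N "\<lambda>i f. f i"] i
    by (intro AE_real_cond_exp_eq_coarser[OF N.prob_space_axioms sub_F sub_G _ integrable _ eq]) auto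
  then show "AE f in ?N. real_cond_exp ?N ?F (indicator ((\<lambda>f. f (Suc i)) -` B \<inter> space ?N)) f =
      real_cond_exp ?N ?G (indicator ((\<lambda>f. f (Suc i)) -` B \<inter> space ?N)) f"
    unfolding g_eq .
qed

section \<open>Martingales\<close>

text \<open>Agrees with the Lebesgue integral when \<phi> is integrable. Working with the two nonnegative
  integrals lets the kernel identities for nonnegative functions apply directly, without
  integrability of \<phi> under every L x.\<close>

definition nn_split_integral :: "'a measure \<Rightarrow> ('a \<Rightarrow> real) \<Rightarrow> real" where
  "nn_split_integral L \<phi> = enn2real (\<integral>\<^sup>+y. ennreal (\<phi> y) \<partial>L) - enn2real (\<integral>\<^sup>+y. ennreal (- \<phi> y) \<partial>L)"

lemma borel_measurable_nn_split_integral[measurable]: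
  assumes "L \<in> S \<rightarrow>\<^sub>M subprob_algebra T" "\<phi> \<in> borel_measurable T"
  shows "(\<lambda>x. nn_split_integral (L x) \<phi>) \<in> borel_measurable S"
  unfolding nn_split_integral_def using assms by measurable

context
  fixes D :: "'z measure" and c :: "'z \<Rightarrow> real" and v :: "'z \<Rightarrow> 't" and w :: "'z \<Rightarrow> 's"
    and L :: "'s \<Rightarrow> 't measure" and S :: "'s measure" and T :: "'t measure"
  assumes c[measurable]: "c \<in> borel_measurable D" and c_01: "\<And>z. c z \<in> {0, 1}"
    and v[measurable]: "v \<in> D \<rightarrow>\<^sub>M T" and w[measurable]: "w \<in> D \<rightarrow>\<^sub>M S"
    and L[measurable]: "L \<in> S \<rightarrow>\<^sub>M subprob_algebra T"
    and transition: "\<And>G. G \<in> borel_measurable T \<Longrightarrow>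
      (\<integral>\<^sup>+z. ennreal (c z) * G (v z) \<partial>D) = (\<integral>\<^sup>+z. ennreal (c z) * (\<integral>\<^sup>+y. G y \<partial>L (w z)) \<partial>D)"
begin

lemma weighted_integral_kernel_pos:
  assumes \<phi>[measurable]: "\<phi> \<in> borel_measurable T" and int: "integrable D (\<lambda>z. \<phi> (v z))"
  shows "integrable D (\<lambda>z. c z * enn2real (\<integral>\<^sup>+y. ennreal (\<phi> y) \<partial>L (w z)))"
    and "(\<integral>z. c z * max 0 (\<phi> (v z)) \<partial>D) = (\<integral>z. c z * enn2real (\<integral>\<^sup>+y. ennreal (\<phi> y) \<partial>L (w z)) \<partial>D)"
proof -
  define H where "H z = (\<integral>\<^sup>+y. ennreal (\<phi> y) \<partial>L (w z))" for z
  have H[measurable]: "H \<in> borel_measurable D" unfolding H_def by measurable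
  have c_nonneg: "0 \<le> c z" for z using c_01[of z] by auto
  have nn: "(\<integral>\<^sup>+z. ennreal (c z) * ennreal (\<phi> (v z)) \<partial>D) = (\<integral>\<^sup>+z. ennreal (c z) * H z \<partial>D)"
    unfolding H_def by (rule transition) measurable
  have "(\<integral>\<^sup>+z. ennreal (c z) * ennreal (\<phi> (v z)) \<partial>D) \<le> (\<integral>\<^sup>+z. ennreal (norm (\<phi> (v z))) \<partial>D)"
  proof (rule nn_integral_mono)
    fix z
    have "ennreal (\<phi> (v z)) \<le> ennreal (norm (\<phi> (v z)))" by (rule ennreal_leI) simp
    then show "ennreal (c z) * ennreal (\<phi> (v z)) \<le> ennreal (norm (\<phi> (v z)))"
      using c_01[of z] by auto
  qed
  also have "\<dots> < \<infinity>" using int by (simp add: integrable_iff_bounded)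
  \<comment> \<open>So c z * H z is finite almost everywhere, and passing to enn2real loses nothing.\<close>
  finally have finite: "(\<integral>\<^sup>+z. ennreal (c z) * H z \<partial>D) < \<infinity>" unfolding nn .
  have "AE z in D. ennreal (c z) * H z \<noteq> \<infinity>"
    by (rule nn_integral_PInf_AE) (use finite in auto)
  then have "AE z in D. ennreal (c z * enn2real (H z)) = ennreal (c z) * H z"
  proof eventually_elim
    case (elim z)
    then show ?case using c_01[of z] by (auto simp: ennreal_enn2real_if)
  qed
  then have nn_real: "(\<integral>\<^sup>+z. ennreal (c z * enn2real (H z)) \<partial>D) = (\<integral>\<^sup>+z. ennreal (c z) * H z \<partial>D)"
    by (rule nn_integral_cong_AE)
  show "integrable D (\<lambda>z. c z * enn2real (\<integral>\<^sup>+y. ennreal (\<phi> y) \<partial>L (w z)))"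
    unfolding H_def[symmetric] by (rule integrableI_nonneg) (use c_nonneg nn_real finite in auto)
  have "(\<integral>z. c z * max 0 (\<phi> (v z)) \<partial>D) = enn2real (\<integral>\<^sup>+z. ennreal (c z) * ennreal (\<phi> (v z)) \<partial>D)"
    using c_nonneg by (subst integral_eq_nn_integral) (auto intro!: arg_cong[where f=enn2real]
        nn_integral_cong simp: ennreal_mult)
  also have "\<dots> = (\<integral>z. c z * enn2real (H z) \<partial>D)"
    using c_nonneg by (subst integral_eq_nn_integral) (auto simp: nn nn_real)
  finally show "(\<integral>z. c z * max 0 (\<phi> (v z)) \<partial>D) = (\<integral>z. c z * enn2real (\<integral>\<^sup>+y. ennreal (\<phi> y) \<partial>L (w z)) \<partial>D)"
    unfolding H_def .
qed

lemma weighted_integral_kernel: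
  assumes \<phi>[measurable]: "\<phi> \<in> borel_measurable T" and int: "integrable D (\<lambda>z. \<phi> (v z))"
  shows "integrable D (\<lambda>z. c z * nn_split_integral (L (w z)) \<phi>)"
    and "(\<integral>z. c z * \<phi> (v z) \<partial>D) = (\<integral>z. c z * nn_split_integral (L (w z)) \<phi> \<partial>D)"
proof -
  have int': "integrable D (\<lambda>z. - \<phi> (v z))" using int by simp
  note pos = weighted_integral_kernel_pos[OF \<phi> int] and neg = weighted_integral_kernel_pos[OF _ int']
  have bound: "\<bar>c z * t\<bar> \<le> \<bar>t\<bar>" for z t using c_01[of z] by auto
  have "integrable D (\<lambda>z. c z * max 0 (\<phi> (v z)))" "integrable D (\<lambda>z. c z * max 0 (- \<phi> (v z)))"
    by (auto intro!: Bochner_Integration.integrable_bound[OF int] AE_I2 order_trans[OF bound]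
        split: split_max)
  moreover have "c z * \<phi> (v z) = c z * max 0 (\<phi> (v z)) - c z * max 0 (- \<phi> (v z))" for z
    by (simp add: max_def algebra_simps)
  ultimately have "(\<integral>z. c z * \<phi> (v z) \<partial>D) =
      (\<integral>z. c z * max 0 (\<phi> (v z)) \<partial>D) - (\<integral>z. c z * max 0 (- \<phi> (v z)) \<partial>D)"
    by simp
  also have "\<dots> = (\<integral>z. c z * nn_split_integral (L (w z)) \<phi> \<partial>D)"
    using pos neg by (simp add: nn_split_integral_def right_diff_distrib)
  finally show "(\<integral>z. c z * \<phi> (v z) \<partial>D) = (\<integral>z. c z * nn_split_integral (L (w z)) \<phi> \<partial>D)" .
  show "integrable D (\<lambda>z. c z * nn_split_integral (L (w z)) \<phi>)"
    using Bochner_Integration.integrable_diff[OF pos(1) neg(1)]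
    by (simp add: nn_split_integral_def right_diff_distrib)
qed

end

lemma martingale_iff_set_integral:
  fixes X :: "nat \<Rightarrow> 'w \<Rightarrow> 'a::euclidean_space"
  assumes M: "prob_space M" and X: "\<And>i. i \<in> {1..n} \<Longrightarrow> X i \<in> borel_measurable M"
  shows "martingale M X n \<longleftrightarrow> (\<forall>i\<in>{1..n}. integrable M (X i)) \<and>
    (\<forall>i. 1 \<le> i \<and> i < n \<longrightarrow> (\<forall>b\<in>Basis. \<forall>E\<in>sets (nat_filtr M X i).
       (\<integral>\<omega>\<in>E. X (Suc i) \<omega> \<bullet> b \<partial>M) = (\<integral>\<omega>\<in>E. X i \<omega> \<bullet> b \<partial>M)))"
proof (cases "\<forall>i\<in>{1..n}. integrable M (X i)")
  case True
  have "(AE \<omega> in M. real_cond_exp M (nat_filtr M X i) (\<lambda>\<omega>. X (Suc i) \<omega> \<bullet> b) \<omega> = X i \<omega> \<bullet> b) \<longleftrightarrow>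
      (\<forall>E\<in>sets (nat_filtr M X i). (\<integral>\<omega>\<in>E. X (Suc i) \<omega> \<bullet> b \<partial>M) = (\<integral>\<omega>\<in>E. X i \<omega> \<bullet> b \<partial>M))"
    if i: "1 \<le> i" "i < n" for i b
  proof (rule AE_real_cond_exp_eq_iff[OF M])
    show "subalgebra M (nat_filtr M X i)" using i by (intro subalgebra_nat_filtr X) auto
    show "integrable M (\<lambda>\<omega>. X (Suc i) \<omega> \<bullet> b)" "integrable M (\<lambda>\<omega>. X i \<omega> \<bullet> b)"
      using True i by (simp_all add: integrable_inner_left)
    show "(\<lambda>\<omega>. X i \<omega> \<bullet> b) \<in> borel_measurable (nat_filtr M X i)"
      using measurable_nat_filtr[of i i X M] i by (intro borel_measurable_inner) auto
  qed
  then show ?thesis unfolding martingale_def using True by blast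
qed (auto simp: martingale_def)

lemma martingale_markov_chain:
  fixes K :: "nat \<Rightarrow> 'a::euclidean_space \<Rightarrow> 'a measure"
  assumes K: "\<And>k. K k \<in> borel \<rightarrow>\<^sub>M prob_algebra borel"
    and int: "\<And>i. i \<in> {1..n} \<Longrightarrow> integrable (markov_chain K n) (\<lambda>f. f i)"
    and mean: "\<And>i b. 1 \<le> i \<Longrightarrow> i < n \<Longrightarrow> b \<in> Basis \<Longrightarrow>
      AE x in distr (markov_chain K n) borel (\<lambda>f. f i). nn_split_integral (K i x) (\<lambda>y. y \<bullet> b) = x \<bullet> b"
  shows "martingale (markov_chain K n) (\<lambda>i f. f i) n"
proof -
  let ?N = "markov_chain K n"
  note coordinate[measurable] = measurable_markov_chain_coordinate[where K=K, OF K]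
  have "(\<integral>f\<in>E. f (Suc i) \<bullet> b \<partial>?N) = (\<integral>f\<in>E. f i \<bullet> b \<partial>?N)"
    if i: "1 \<le> i" "i < n" and b: "b \<in> Basis" and E: "E \<in> sets (nat_filtr ?N (\<lambda>i f. f i) i)" for i b E
  proof -
    have [measurable]: "E \<in> sets ?N"
      using subalgebra_nat_filtr[of i "\<lambda>i f. f i" ?N] E by (auto simp: subalgebra_def)
    have transition: "(\<integral>\<^sup>+f. ennreal (indicator E f) * G (f (Suc i)) \<partial>?N) =
        (\<integral>\<^sup>+f. ennreal (indicator E f) * (\<integral>\<^sup>+y. G y \<partial>K i (f i)) \<partial>?N)"
      if "G \<in> borel_measurable borel" for G
      using nn_integral_markov_chain_transition[where K=K, OF K _ E that] i by (simp add: ennreal_indicator)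
    note [measurable] = measurable_prob_algebraD[OF K]
    have "{x \<in> space borel. nn_split_integral (K i x) (\<lambda>y. y \<bullet> b) = x \<bullet> b} \<in> sets borel"
      by measurable
    then have "AE f in ?N. nn_split_integral (K i (f i)) (\<lambda>y. y \<bullet> b) = f i \<bullet> b"
      using mean[OF i b] by (simp add: AE_distr_iff)
    moreover have "(\<integral>f. indicator E f * (f (Suc i) \<bullet> b) \<partial>?N) =
        (\<integral>f. indicator E f * nn_split_integral (K i (f i)) (\<lambda>y. y \<bullet> b) \<partial>?N)"
      using int[of "Suc i"] i
      by (intro weighted_integral_kernel(2)[where T=borel and S=borel, OF _ _ _ _ _ transition])
        (auto simp: integrable_inner_left measurable_prob_algebraD[OF K] split: split_indicator)
    ultimately show ?thesis
      unfolding set_lebesgue_integral_def by (auto intro!: integral_cong_AE)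
  qed
  then show ?thesis
    using int by (subst martingale_iff_set_integral[OF prob_space_markov_chain[where K=K, OF K]]) auto
qed

lemma martingale_integral_indicator_eq:
  fixes X :: "nat \<Rightarrow> 'w \<Rightarrow> 'a::euclidean_space"
  assumes M: "prob_space M" and X: "\<And>i. i \<in> {1..n} \<Longrightarrow> X i \<in> borel_measurable M"
    and "martingale M X n" and i: "1 \<le> i" "i < n" and b: "b \<in> Basis" and A: "A \<in> sets borel"
  shows "(\<integral>\<omega>. indicator A (X i \<omega>) * (X (Suc i) \<omega> \<bullet> b) \<partial>M) = (\<integral>\<omega>. indicator A (X i \<omega>) * (X i \<omega> \<bullet> b) \<partial>M)"
proof -
  have E: "X i -` A \<inter> space M \<in> sets (nat_filtr M X i)"
    using measurable_sets[OF measurable_nat_filtr[of i i X M] A] i by simp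
  have "(\<integral>\<omega>. indicator A (X i \<omega>) * (X (Suc i) \<omega> \<bullet> b) \<partial>M) =
      (\<integral>\<omega>\<in>X i -` A \<inter> space M. X (Suc i) \<omega> \<bullet> b \<partial>M)"
    unfolding set_lebesgue_integral_def
    by (intro Bochner_Integration.integral_cong) (auto split: split_indicator)
  also have "\<dots> = (\<integral>\<omega>\<in>X i -` A \<inter> space M. X i \<omega> \<bullet> b \<partial>M)"
    using E \<open>martingale M X n\<close> martingale_iff_set_integral[where X=X and n=n, OF M X] i b by blast
  also have "\<dots> = (\<integral>\<omega>. indicator A (X i \<omega>) * (X i \<omega> \<bullet> b) \<partial>M)"
    unfolding set_lebesgue_integral_def
    by (intro Bochner_Integration.integral_cong) (auto split: split_indicator)
  finally show ?thesis .
qed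

lemma AE_nn_split_integral_cond_distr_kernel:
  fixes X :: "nat \<Rightarrow> 'w \<Rightarrow> 'a::euclidean_space"
  assumes M: "prob_space M" and X: "\<And>i. i \<in> {1..n} \<Longrightarrow> X i \<in> borel_measurable M"
    and "martingale M X n" and i: "1 \<le> i" "i < n" and b: "b \<in> Basis"
    and L: "cond_distr_kernel M borel borel (X i) (X (Suc i)) L"
  shows "AE x in distr M borel (X i). nn_split_integral (L x) (\<lambda>y. y \<bullet> b) = x \<bullet> b"
proof -
  have [measurable]: "X i \<in> borel_measurable M" "X (Suc i) \<in> borel_measurable M" using X i by auto
  note [measurable] = measurable_prob_algebraD[OF cond_distr_kernelD(1)[OF L]]
  have ints: "integrable M (X i)" "integrable M (X (Suc i))"
    using \<open>martingale M X n\<close> i unfolding martingale_def by auto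
  have weighted: "integrable M (\<lambda>\<omega>. indicator A (X i \<omega>) * nn_split_integral (L (X i \<omega>)) (\<lambda>y. y \<bullet> b))"
    "(\<integral>\<omega>. indicator A (X i \<omega>) * (X (Suc i) \<omega> \<bullet> b) \<partial>M) =
     (\<integral>\<omega>. indicator A (X i \<omega>) * nn_split_integral (L (X i \<omega>)) (\<lambda>y. y \<bullet> b) \<partial>M)"
    if [measurable]: "A \<in> sets borel" for A
    using weighted_integral_kernel[where D=M and c="\<lambda>\<omega>. indicator A (X i \<omega>)" and v="X (Suc i)"
        and w="X i" and L=L and S=borel and T=borel and \<phi>="\<lambda>y. y \<bullet> b"]
      ints nn_integral_cond_distr_kernel_indicator[OF L, of A]
    by (auto simp: integrable_inner_left ennreal_indicator split: split_indicator)
  show ?thesis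
  proof (rule density_unique_real)
    show "integrable (distr M borel (X i)) (\<lambda>x. nn_split_integral (L x) (\<lambda>y. y \<bullet> b))"
      using weighted(1)[of UNIV] by (simp add: integrable_distr_eq)
    show "integrable (distr M borel (X i)) (\<lambda>x. x \<bullet> b)"
      using ints by (simp add: integrable_distr_eq integrable_inner_left)
    fix A assume "A \<in> sets (distr M borel (X i))"
    then have A[measurable]: "A \<in> sets borel" by simp
    have "(\<integral>\<omega>. indicator A (X i \<omega>) * (X (Suc i) \<omega> \<bullet> b) \<partial>M) =
        (\<integral>\<omega>. indicator A (X i \<omega>) * (X i \<omega> \<bullet> b) \<partial>M)"
      by (rule martingale_integral_indicator_eq[where X=X and n=n, OF M X \<open>martingale M X n\<close> i b A])
    then show "(\<integral>x\<in>A. nn_split_integral (L x) (\<lambda>y. y \<bullet> b) \<partial>distr M borel (X i)) = (\<integral>x\<in>A. x \<bullet> b \<partial>distr M borel (X i))"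
      unfolding set_lebesgue_integral_def weighted(2)[OF A] by (simp add: integral_distr)
  qed
qed

lemma transition_kernels_exist:
  fixes X :: "nat \<Rightarrow> 'w \<Rightarrow> 'a::euclidean_space"
  assumes M: "prob_space M" and X: "\<And>i. i \<in> {1..n} \<Longrightarrow> X i \<in> borel_measurable M"
  obtains K where "\<And>k. K k \<in> borel \<rightarrow>\<^sub>M prob_algebra borel"
    and "1 \<le> n \<Longrightarrow> K 0 = (\<lambda>_. distr M borel (X 1))"
    and "\<And>k. 1 \<le> k \<Longrightarrow> k < n \<Longrightarrow> cond_distr_kernel M borel borel (X k) (X (Suc k)) (K k)"
proof -
  define P where "P k L \<longleftrightarrow> L \<in> borel \<rightarrow>\<^sub>M prob_algebra borel \<and>
    (1 \<le> n \<and> k = 0 \<longrightarrow> L = (\<lambda>_. distr M borel (X 1))) \<and>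
    (1 \<le> k \<and> k < n \<longrightarrow> cond_distr_kernel M borel borel (X k) (X (Suc k)) L)" for k L
  have "\<exists>L. P k L" for k
  proof (cases "1 \<le> k \<and> k < n")
    case True
    then have "X k \<in> borel_measurable M" "X (Suc k) \<in> borel_measurable M" using X by auto
    then obtain L where L: "cond_distr_kernel M borel borel (X k) (X (Suc k)) L"
      by (rule cond_distr_kernel_exists[OF M])
    then have "P k L" using True cond_distr_kernelD(1)[OF L] by (simp add: P_def)
    then show ?thesis by blast
  next
    case False
    define \<nu> where "\<nu> = (if 1 \<le> n then distr M borel (X 1) else return borel 0)"
    have "\<nu> \<in> space (prob_algebra borel)"
      using X[of 1] by (auto simp: \<nu>_def space_prob_algebra prob_space.prob_space_distr[OF M] prob_space_return)
    then have "P k (\<lambda>_. \<nu>)" using False unfolding P_def by (auto simp: \<nu>_def)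
    then show ?thesis by blast
  qed
  then obtain K where "P k (K k)" for k using choice[of P] by blast
  then show ?thesis using that unfolding P_def by blast
qed

lemma distr_markov_chain_eq_marginal:
  fixes X :: "nat \<Rightarrow> 'w \<Rightarrow> 'a::euclidean_space"
  assumes M: "prob_space M" and X: "\<And>i. i \<in> {1..n} \<Longrightarrow> X i \<in> borel_measurable M"
    and K: "\<And>k. K k \<in> borel \<rightarrow>\<^sub>M prob_algebra borel"
    and K_0: "1 \<le> n \<Longrightarrow> K 0 = (\<lambda>_. distr M borel (X 1))"
    and K_Suc: "\<And>k. 1 \<le> k \<Longrightarrow> k < n \<Longrightarrow> cond_distr_kernel M borel borel (X k) (X (Suc k)) (K k)"
    and j: "j \<in> {1..n}"
  shows "distr (markov_chain K n) borel (\<lambda>f. f j) = distr M borel (X j)"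
proof -
  have "distr (markov_chain K j) borel (\<lambda>f. f j) = distr M borel (X j)" if "1 \<le> j" "j \<le> n" for j
    using that
  proof (induction j)
    case (Suc j)
    have "distr (markov_chain K (Suc j)) borel (\<lambda>f. f (Suc j)) = distr (markov_chain K j) borel (\<lambda>f. f j) \<bind> K j"
      by (rule distr_markov_chain_Suc_coordinate[where K=K, OF K])
    also have "\<dots> = distr M borel (X (Suc j))"
    proof (cases "j = 0")
      case True
      have "distr (markov_chain K 0) borel (\<lambda>f. f 0) = return borel undefined"
        by (simp add: distr_return space_path_space)
      moreover have "distr M borel (X 1) \<in> space (subprob_algebra borel)"
        using X[of 1] Suc.prems by (auto simp: space_subprob_algebra prob_space.prob_space_distr[OF M]
            prob_space_imp_subprob_space)
      ultimately show ?thesis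
        using True K_0 Suc.prems by (simp add: bind_return[OF measurable_const])
    next
      case False
      then have "distr (markov_chain K j) borel (\<lambda>f. f j) = distr M borel (X j)" using Suc by simp
      then show ?thesis
        using False Suc.prems X by (simp add: bind_cond_distr_kernel[OF K_Suc M])
    qed
    finally show ?case .
  qed simp
  then show ?thesis
    using j distr_markov_chain_coordinate[where K=K, OF K, of j n] by simp
qed

lemma integrable_iff_distr_eq:
  fixes X :: "'w \<Rightarrow> 'a::{banach, second_countable_topology}"
  assumes "Y \<in> borel_measurable N" "X \<in> borel_measurable M" "distr N borel Y = distr M borel X"
  shows "integrable N Y \<longleftrightarrow> integrable M X"
  using integrable_distr_eq[OF assms(1), of "\<lambda>x. x"] integrable_distr_eq[OF assms(2), of "\<lambda>x. x"] assms(3)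
  by simp

theorem proposition4:
  fixes M :: "'w measure" and X :: "nat \<Rightarrow> 'w \<Rightarrow> 'a::euclidean_space" and n :: nat
  assumes "prob_space M"
    and "\<And>i. i \<in> {1..n} \<Longrightarrow> X i \<in> borel_measurable M"
    and "martingale M X n"
  shows "\<exists>(N :: (nat \<Rightarrow> 'a) measure) (Y :: nat \<Rightarrow> (nat \<Rightarrow> 'a) \<Rightarrow> 'a).
           prob_space N \<and>
           (\<forall>i\<in>{1..n}. Y i \<in> borel_measurable N) \<and>
           martingale N Y n \<and> markov N Y n \<and>
           (\<forall>i\<in>{1..n}. distr N borel (Y i) = distr M borel (X i))"
proof -
  obtain K where K: "\<And>k. K k \<in> borel \<rightarrow>\<^sub>M prob_algebra borel"
    and K_0: "1 \<le> n \<Longrightarrow> K 0 = (\<lambda>_. distr M borel (X 1))"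
    and K_Suc: "\<And>k. 1 \<le> k \<Longrightarrow> k < n \<Longrightarrow> cond_distr_kernel M borel borel (X k) (X (Suc k)) (K k)"
    using transition_kernels_exist[where X=X and n=n, OF assms(1,2)] by blast
  let ?N = "markov_chain K n"
  note coordinate = measurable_markov_chain_coordinate[where K=K, OF K]
  have marginal: "distr ?N borel (\<lambda>f. f i) = distr M borel (X i)" if "i \<in> {1..n}" for i
    by (rule distr_markov_chain_eq_marginal[where M=M and X=X and n=n and K=K, OF assms(1,2) K K_0 K_Suc that])
  have "martingale ?N (\<lambda>i f. f i) n"
  proof (rule martingale_markov_chain[OF K])
    show "integrable ?N (\<lambda>f. f i)" if "i \<in> {1..n}" for i
      using integrable_iff_distr_eq[OF coordinate assms(2)[OF that] marginal[OF that]] assms(3) that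
      by (auto simp: martingale_def)
    show "AE x in distr ?N borel (\<lambda>f. f i). nn_split_integral (K i x) (\<lambda>y. y \<bullet> b) = x \<bullet> b"
      if "1 \<le> i" "i < n" "b \<in> Basis" for i b
    proof -
      have "i \<in> {1..n}" using that by simp
      then show ?thesis unfolding marginal[OF \<open>i \<in> {1..n}\<close>]
        using AE_nn_split_integral_cond_distr_kernel[where M=M and X=X and n=n, OF assms that K_Suc[OF that(1,2)]]
        by simp
    qed
  qed
  moreover have "markov ?N (\<lambda>i f. f i) n" by (rule markov_markov_chain[OF K])
  moreover have "prob_space ?N" by (rule prob_space_markov_chain[where K=K, OF K])
  ultimately show ?thesis
    using coordinate marginal by (intro exI[of _ ?N] exI[of _ "\<lambda>i f. f i"]) simp
qed

end
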